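(* Let $k$ be an algebraically closed field, $n\ge1$, $1\le g\le n$, $h:=n+1-g$, and let $K$ and the representations $V_{(p,q)}$ be as in the context. Fix $m\in\mathbb N$. Let $Q_m^\infty$ be the quiver with vertices $(r,s)_\infty$ for $s\in\{0,\dots,h-1\}$ and $0\le r\le h(m+1)-s$, with arrows $\rho_\infty(r,s):(r,s)_\infty\to(r+1,s)_\infty$, and $\pi_\infty(r,s):(r+1,s-1)_\infty\to(r,s)_\infty$ for $1\le s\le h-1$, $\pi_\infty(r,0):(r+1,h-1)_\infty\to(r,0)_\infty$, whenever both endpoints lie in $Q_m^\infty$. Let $F_\infty:kQ_m^\infty\to\operatorname{rep}K$ be the $k$-linear functor defined in the context and $R_m^\infty$ the full subcategory of $\operatorname{rep}K$ with objects $F_\infty X$, $X$ a vertex of $Q_m^\infty$. For $s\in\{0,\dots,h-1\}$ let $s^+=s+1$ if $s<h-1$ and $s^+=0$ if $s=h-1$. Let $\overline{kQ_m^\infty}$ be the quotient of the path category $kQ_m^\infty$ by the ideal generated by (i) $\pi_\infty(r+1,s^+)\circ\rho_\infty(r+1,s)=\rho_\infty(r,s^+)\circ\pi_\infty(r,s^+)$ for all $r,s$ for which all arrows involved lie in $Q_m^\infty$, and (ii) $\pi_\infty(0,s^+)\circ\rho_\infty(0,s)=0$ for all $s\in\{0,\dots,h-1\}$. Then $F_\infty$ induces an isomorphism of $k$-categories $\overline{F_\infty}:\overline{kQ_m^\infty}\to R_m^\infty$.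
   Context: $K$: quiver with vertices $0,\dots,n$ and arrows $\beta_x:x\to x+1$ ($0\le x\le g-1$) and $\alpha_x:x+1\to x$ ($g\le x\le n$), indices modulo $n+1$; $\operatorname{rep}K$ is the category of finite-dimensional representations. For $0\le p\le n$, $q\ge p$: $V_{(p,q)}(x)$ is spanned by the basis vectors $e_i$, $p\le i\le q$, $i\equiv x\pmod{n+1}$; $V_{(p,q)}(\beta_x)(e_i)=e_{i+1}$ if $i<q$, $=0$ if $i=q$; $V_{(p,q)}(\alpha_x)(e_i)=e_{i-1}$ if $i>p$, $=0$ if $i=p$. Composition $\circ$ is written right to left. For integers $a$ and $b>0$, $\mathrm{DIV}(a,b)$ and $\mathrm{MOD}(a,b)$ are the unique integers with $a=\mathrm{DIV}(a,b)\,b+\mathrm{MOD}(a,b)$ and $0\le\mathrm{MOD}(a,b)<b$. Definition of $F_\infty$: put $p_0=0$, $p_s=g+s$ for $1\le s\le h-1$, and $q_{r,s}=g+\mathrm{MOD}(r+s,h)+(n+1)\mathrm{DIV}(r+s,h)$; set $F_\infty(r,s)_\infty=V_{(p_s,q_{r,s})}$. $F_\infty\rho_\infty(r,s):V_{(p_s,q_{r,s})}\to V_{(p_s,q_{r+1,s})}$ is $e_t\mapsto e_t$ for $p_s\le t\le q_{r,s}$. For $1\le s\le h-1$, $F_\infty\pi_\infty(r,s):V_{(p_{s-1},q_{r+1,s-1})}\to V_{(p_s,q_{r,s})}$ is $e_t\mapsto0$ for $p_{s-1}\le t<p_s$ and $e_t\mapsto e_t$ for $p_s\le t\le q_{r+1,s-1}$.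 For $s=0$, $F_\infty\pi_\infty(r,0):V_{(p_{h-1},q_{r+1,h-1})}\to V_{(0,q_{r,0})}$ is $e_t\mapsto 0$ for $p_{h-1}\le t\le n$ and $e_t\mapsto e_{t-(n+1)}$ for $n+1\le t\le q_{r+1,h-1}$. *)

theory Defs
  imports "HOL-Computational_Algebra.Polynomial"
begin

text \<open>A vector of V_(p,q) is a function int => 'k (coefficient of e_i), supported in [p,q].
  A morphism V_(p,q) -> V_(p',q') is encoded by a matrix M :: int => int => 'k, where
  M i is the image of e_i, i.e. M i j is the coefficient of e_j in f(e_i).\<close>

definition up_map :: "int \<Rightarrow> int \<Rightarrow> (int \<Rightarrow> 'k::zero) \<Rightarrow> int \<Rightarrow> 'k" where
  "up_map p q v = (\<lambda>j. if p < j \<and> j \<le> q then v (j - 1) else 0)"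

definition down_map :: "int \<Rightarrow> int \<Rightarrow> (int \<Rightarrow> 'k::zero) \<Rightarrow> int \<Rightarrow> 'k" where
  "down_map p q v = (\<lambda>j. if p \<le> j \<and> j < q then v (j + 1) else 0)"

text \<open>M is a morphism of representations of K from V_(p,q) to V_(p',q'):
  a family of linear maps V(x) -> W(x) (support condition) commuting with all arrows
  beta_x (0 <= x <= g-1) and alpha_x (g <= x <= n).\<close>
definition is_rep_hom :: "nat \<Rightarrow> nat \<Rightarrow> int \<times> int \<Rightarrow> int \<times> int \<Rightarrow> (int \<Rightarrow> int \<Rightarrow> 'k::field) \<Rightarrow> bool" where
  "is_rep_hom n g V W M \<longleftrightarrow>
    (\<forall>i j. M i j \<noteq> 0 \<longrightarrow> fst V \<le> i \<and> i \<le> snd V \<and> fst W \<le> j \<and> j \<le> snd W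
                          \<and> i mod int (n+1) = j mod int (n+1))
  \<and> (\<forall>x\<in>{0..<g}. \<forall>i. fst V \<le> i \<and> i \<le> snd V \<and> i mod int (n+1) = int x \<longrightarrow>
        up_map (fst W) (snd W) (M i) = (if i < snd V then M (i+1) else (\<lambda>_. 0)))
  \<and> (\<forall>x\<in>{g..n}. \<forall>i. fst V \<le> i \<and> i \<le> snd V \<and> i mod int (n+1) = int ((x+1) mod (n+1)) \<longrightarrow>
        down_map (fst W) (snd W) (M i) = (if fst V < i then M (i-1) else (\<lambda>_. 0)))"

definition HomK :: "nat \<Rightarrow> nat \<Rightarrow> int \<times> int \<Rightarrow> int \<times> int \<Rightarrow> (int \<Rightarrow> int \<Rightarrow> 'k::field) set" where
  "HomK n g V W = {M. is_rep_hom n g V W M}"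

definition midentity :: "int \<times> int \<Rightarrow> int \<Rightarrow> int \<Rightarrow> 'k::field" where
  "midentity V = (\<lambda>i j. if i = j \<and> fst V \<le> i \<and> i \<le> snd V then 1 else 0)"

text \<open>Composition: first M : U -> V, then N : V -> W (V = (p,q) is the middle object).\<close>
definition mcomp :: "int \<times> int \<Rightarrow> (int \<Rightarrow> int \<Rightarrow> 'k::field) \<Rightarrow> (int \<Rightarrow> int \<Rightarrow> 'k) \<Rightarrow> int \<Rightarrow> int \<Rightarrow> 'k" where
  "mcomp V M N = (\<lambda>i l. \<Sum>j\<in>{fst V..snd V}. M i j * N j l)"

definition hh :: "nat \<Rightarrow> nat \<Rightarrow> nat" where "hh n g = n + 1 - g"

datatype qarrow = Rho nat nat | Pi nat nat

definition in_Q :: "nat \<Rightarrow> nat \<Rightarrow> nat \<Rightarrow> nat \<times> nat \<Rightarrow> bool" where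
  "in_Q n g m X \<longleftrightarrow> snd X < hh n g \<and> fst X + snd X \<le> hh n g * (m + 1)"

fun qsrc :: "nat \<Rightarrow> nat \<Rightarrow> qarrow \<Rightarrow> nat \<times> nat" where
  "qsrc n g (Rho r s) = (r, s)"
| "qsrc n g (Pi r s) = (r + 1, if s = 0 then hh n g - 1 else s - 1)"

fun qtgt :: "nat \<Rightarrow> nat \<Rightarrow> qarrow \<Rightarrow> nat \<times> nat" where
  "qtgt n g (Rho r s) = (r + 1, s)"
| "qtgt n g (Pi r s) = (r, s)"

definition valid_arrow :: "nat \<Rightarrow> nat \<Rightarrow> nat \<Rightarrow> qarrow \<Rightarrow> bool" where
  "valid_arrow n g m a \<longleftrightarrow> in_Q n g m (qsrc n g a) \<and> in_Q n g m (qtgt n g a)"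

text \<open>Paths listed in traversal order: [a1,...,ak] is the path ak o ... o a1.
  The empty list at X is the trivial path e_X.\<close>
fun is_path :: "nat \<Rightarrow> nat \<Rightarrow> nat \<Rightarrow> nat \<times> nat \<Rightarrow> nat \<times> nat \<Rightarrow> qarrow list \<Rightarrow> bool" where
  "is_path n g m X Y [] \<longleftrightarrow> X = Y \<and> in_Q n g m X"
| "is_path n g m X Y (a # w) \<longleftrightarrow> valid_arrow n g m a \<and> qsrc n g a = X \<and> is_path n g m (qtgt n g a) Y w"

definition kQ :: "nat \<Rightarrow> nat \<Rightarrow> nat \<Rightarrow> nat \<times> nat \<Rightarrow> nat \<times> nat \<Rightarrow> (qarrow list \<Rightarrow> 'k::field) set" where
  "kQ n g m X Y = {c. finite {w. c w \<noteq> 0} \<and> (\<forall>w. c w \<noteq> 0 \<longrightarrow> is_path n g m X Y w)}"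

definition pp :: "nat \<Rightarrow> nat \<Rightarrow> int" where
  "pp g s = (if s = 0 then 0 else int g + int s)"

definition qq :: "nat \<Rightarrow> nat \<Rightarrow> nat \<Rightarrow> nat \<Rightarrow> int" where
  "qq n g r s = int g + int ((r + s) mod hh n g) + int (n + 1) * int ((r + s) div hh n g)"

definition Fobj :: "nat \<Rightarrow> nat \<Rightarrow> nat \<times> nat \<Rightarrow> int \<times> int" where
  "Fobj n g X = (pp g (snd X), qq n g (fst X) (snd X))"

fun Farr :: "nat \<Rightarrow> nat \<Rightarrow> qarrow \<Rightarrow> int \<Rightarrow> int \<Rightarrow> 'k::field" where
  "Farr n g (Rho r s) = (\<lambda>i j. if i = j \<and> pp g s \<le> i \<and> i \<le> qq n g r s then 1 else 0)"
| "Farr n g (Pi r s) =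
     (if s = 0 then
        (\<lambda>i j. if int (n + 1) \<le> i \<and> i \<le> qq n g (r + 1) (hh n g - 1) \<and> j = i - int (n + 1) then 1 else 0)
      else
        (\<lambda>i j. if i = j \<and> pp g s \<le> i \<and> i \<le> qq n g (r + 1) (s - 1) then 1 else 0))"

fun Fpath :: "nat \<Rightarrow> nat \<Rightarrow> nat \<times> nat \<Rightarrow> qarrow list \<Rightarrow> int \<Rightarrow> int \<Rightarrow> 'k::field" where
  "Fpath n g X [] = midentity (Fobj n g X)"
| "Fpath n g X (a # w) = mcomp (Fobj n g (qtgt n g a)) (Farr n g a) (Fpath n g (qtgt n g a) w)"

definition Flin :: "nat \<Rightarrow> nat \<Rightarrow> nat \<times> nat \<Rightarrow> (qarrow list \<Rightarrow> 'k::field) \<Rightarrow> int \<Rightarrow> int \<Rightarrow> 'k" where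
  "Flin n g X c = (\<lambda>i j. \<Sum>w\<in>{w. c w \<noteq> 0}. c w * Fpath n g X w i j)"

definition splus :: "nat \<Rightarrow> nat \<Rightarrow> nat \<Rightarrow> nat" where
  "splus n g s = (if s + 1 < hh n g then s + 1 else 0)"

definition pvec :: "qarrow list \<Rightarrow> qarrow list \<Rightarrow> 'k::field" where
  "pvec w = (\<lambda>w'. if w' = w then 1 else 0)"

text \<open>Generating relations, as triples (source, target, linear combination of paths).\<close>
definition rel_gen :: "nat \<Rightarrow> nat \<Rightarrow> nat \<Rightarrow> ((nat \<times> nat) \<times> (nat \<times> nat) \<times> (qarrow list \<Rightarrow> 'k::field)) set" where
  "rel_gen n g m =
     {((r + 1, s), (r + 1, splus n g s),
        (\<lambda>w. pvec [Rho (r + 1) s, Pi (r + 1) (splus n g s)] w - pvec [Pi r (splus n g s), Rho r (splus n g s)] w))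
      | r s. s < hh n g \<and> valid_arrow n g m (Rho (r + 1) s) \<and> valid_arrow n g m (Pi (r + 1) (splus n g s))
             \<and> valid_arrow n g m (Pi r (splus n g s)) \<and> valid_arrow n g m (Rho r (splus n g s))}
   \<union> {((0, s), (0, splus n g s), pvec [Rho 0 s, Pi 0 (splus n g s)])
      | s. s < hh n g \<and> valid_arrow n g m (Rho 0 s) \<and> valid_arrow n g m (Pi 0 (splus n g s))}"

text \<open>u o rho o v for paths v (first) and u (last).\<close>
definition sandwich :: "qarrow list \<Rightarrow> (qarrow list \<Rightarrow> 'k::field) \<Rightarrow> qarrow list \<Rightarrow> qarrow list \<Rightarrow> 'k" where
  "sandwich v \<rho> u = (\<lambda>w. \<Sum>w'\<in>{w'. \<rho> w' \<noteq> 0 \<and> w = v @ w' @ u}. \<rho> w')"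

inductive in_ideal :: "nat \<Rightarrow> nat \<Rightarrow> nat \<Rightarrow> nat \<times> nat \<Rightarrow> nat \<times> nat \<Rightarrow> (qarrow list \<Rightarrow> 'k::field) \<Rightarrow> bool"
  for n g m X Y where
  zero: "in_ideal n g m X Y (\<lambda>_. 0)"
| gen: "(A, B, \<rho>) \<in> rel_gen n g m \<Longrightarrow> is_path n g m X A v \<Longrightarrow> is_path n g m B Y u
        \<Longrightarrow> in_ideal n g m X Y (sandwich v \<rho> u)"
| add: "in_ideal n g m X Y c \<Longrightarrow> in_ideal n g m X Y d \<Longrightarrow> in_ideal n g m X Y (\<lambda>w. c w + d w)"
| smult: "in_ideal n g m X Y c \<Longrightarrow> in_ideal n g m X Y (\<lambda>w. a * c w)"

end

theory Submission
  imports Defs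
begin

text \<open>Modulo the relations, a path \<open>(r, s) \<rightarrow> (r', s')\<close> is either zero or equal to a canonical path:
  \<open>b\<close> arrows \<open>\<pi>\<close> followed by arrows \<open>\<rho>\<close>. The commutativity relations move every \<open>\<pi>\<close> in front of
  the \<open>\<rho>\<close>'s, and the zero relations kill a \<open>\<pi>\<close> pushed down to \<open>r = 0\<close>. The functor sends the
  canonical path with \<open>b\<close> arrows \<open>\<pi>\<close> to the matrix \<open>e\<^sub>i \<mapsto> e\<^sub>i\<^sub>-\<^sub>(\<^sub>n\<^sub>+\<^sub>1\<^sub>)\<^sub>k\<close>, \<open>k = (s + b) div h\<close>,
  on the rows \<open>i \<ge> pp_periodic n g (s + b)\<close>, which is a morphism of representations; the relations
  hold for the images, so the ideal lies in the kernel. Conversely, a morphism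
  \<open>V\<^sub>(\<^sub>p\<^sub>,\<^sub>q\<^sub>) \<rightarrow> V\<^sub>(\<^sub>p\<^sub>'\<^sub>,\<^sub>q\<^sub>'\<^sub>)\<close> commutes with the arrows of \<open>K\<close>, hence is constant along each diagonal
  \<open>j = i - (n + 1) k\<close>, and the diagonals on which it can be nonzero are exactly those of the
  canonical paths: this gives fullness. The images of distinct canonical paths live on distinct
  diagonals, so a combination of paths with zero image reduces to zero modulo the relations, which is
  faithfulness.\<close>

section \<open>Shift matrices\<close>

definition shift_mat :: "int \<Rightarrow> int \<Rightarrow> int \<Rightarrow> int \<Rightarrow> int \<Rightarrow> 'k::field" where
  "shift_mat d lo hi = (\<lambda>i j. if j = i - d \<and> lo \<le> i \<and> i \<le> hi then 1 else 0)"

lemma shift_mat_empty: "hi < lo \<Longrightarrow> shift_mat d lo hi = (\<lambda>_ _. 0)"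
  by (auto simp: shift_mat_def fun_eq_iff)

lemma midentity_eq_shift_mat: "midentity V = shift_mat 0 (fst V) (snd V)"
  by (auto simp: shift_mat_def midentity_def fun_eq_iff)

lemma mcomp_shift_mat:
  "mcomp V (shift_mat d1 l1 h1) (shift_mat d2 l2 h2) =
   shift_mat (d1 + d2) (max (max l1 (fst V + d1)) (l2 + d1)) (min (min h1 (snd V + d1)) (h2 + d1))"
proof (intro ext)
  fix i l
  have "mcomp V (shift_mat d1 l1 h1) (shift_mat d2 l2 h2) i l =
     (\<Sum>j\<in>{fst V..snd V}. if j = i - d1 then
        (if l1 \<le> i \<and> i \<le> h1 \<and> l = j - d2 \<and> l2 \<le> j \<and> j \<le> h2 then 1 else 0) else 0)"
    unfolding mcomp_def shift_mat_def by (intro sum.cong) auto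
  also have "\<dots> = shift_mat (d1 + d2) (max (max l1 (fst V + d1)) (l2 + d1))
                     (min (min h1 (snd V + d1)) (h2 + d1)) i l"
    by (subst sum.delta) (auto simp: shift_mat_def algebra_simps)
  finally show "mcomp V (shift_mat d1 l1 h1) (shift_mat d2 l2 h2) i l = \<dots>" .
qed

lemma mcomp_assoc: "mcomp V A (mcomp W B C) = mcomp W (mcomp V A B) C"
  unfolding mcomp_def
  by (auto simp: fun_eq_iff sum_distrib_left sum_distrib_right mult.assoc intro: sum.swap)

lemma mcomp_zero_left: "mcomp V (\<lambda>_ _. 0) B = (\<lambda>_ _. 0)"
  by (simp add: mcomp_def fun_eq_iff)

lemma mcomp_zero_right: "mcomp V A (\<lambda>_ _. 0) = (\<lambda>_ _. 0)"
  by (simp add: mcomp_def fun_eq_iff)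

lemma mcomp_nonzero_row: "mcomp V A B i l \<noteq> 0 \<Longrightarrow> \<exists>j. A i j \<noteq> 0"
  unfolding mcomp_def by (metis (no_types, lifting) mult_eq_0_iff sum.neutral)

lemma mcomp_midentity_left:
  assumes "\<And>i l. B i l \<noteq> 0 \<Longrightarrow> fst V \<le> i \<and> i \<le> snd V"
  shows "mcomp V (midentity V) B = B"
proof (intro ext)
  fix i l
  have "mcomp V (midentity V) B i l = (\<Sum>j\<in>{fst V..snd V}. if j = i then B i l else 0)"
    unfolding mcomp_def midentity_def by (intro sum.cong) auto
  also have "\<dots> = B i l" using assms[of i l] by (subst sum.delta) auto
  finally show "mcomp V (midentity V) B i l = B i l" .
qed

lemma sandwich_app: "sandwich v c u (v @ w @ u) = c w"
proof -
  have "{w'. c w' \<noteq> 0 \<and> v @ w @ u = v @ w' @ u} = (if c w \<noteq> 0 then {w} else {})" by auto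
  then show ?thesis unfolding sandwich_def by auto
qed

lemma sandwich_outside: "(\<And>w. x \<noteq> v @ w @ u) \<Longrightarrow> sandwich v c u x = 0"
  unfolding sandwich_def by auto

lemma sandwich_pointwise:
  assumes "f 0 0 = 0"
  shows "sandwich v (\<lambda>w. f (c w) (d w)) u = (\<lambda>x. f (sandwich v c u x) (sandwich v d u x))"
proof
  fix x
  show "sandwich v (\<lambda>w. f (c w) (d w)) u x = f (sandwich v c u x) (sandwich v d u x)"
    using assms by (cases "\<exists>w. x = v @ w @ u") (auto simp: sandwich_app sandwich_outside)
qed

lemma sandwich_zero: "sandwich v (\<lambda>_. 0) u = (\<lambda>_. 0)"
  unfolding sandwich_def by auto

lemma sandwich_add: "sandwich v (\<lambda>w. c w + d w) u = (\<lambda>w. sandwich v c u w + sandwich v d u w)"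
  by (rule sandwich_pointwise) simp

lemma sandwich_diff: "sandwich v (\<lambda>w. c w - d w) u = (\<lambda>w. sandwich v c u w - sandwich v d u w)"
  by (rule sandwich_pointwise) simp

lemma sandwich_smult: "sandwich v (\<lambda>w. a * c w) u = (\<lambda>w. a * sandwich v c u w)"
  using sandwich_pointwise[of "\<lambda>x _. a * x" v c c u] by simp

lemma sandwich_pvec: "sandwich v (pvec w) u = pvec (v @ w @ u)"
proof
  fix x
  show "sandwich v (pvec w) u x = pvec (v @ w @ u) x"
    by (cases "\<exists>w. x = v @ w @ u") (auto simp: sandwich_app sandwich_outside pvec_def split: if_splits)
qed

lemma sandwich_Nil: "sandwich [] c [] = c"
  using sandwich_app[of "[]" c "[]"] by auto

lemma sandwich_sandwich: "sandwich v (sandwich v' c u') u = sandwich (v @ v') c (u' @ u)"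
proof
  fix x
  show "sandwich v (sandwich v' c u') u x = sandwich (v @ v') c (u' @ u) x"
  proof (cases "\<exists>w. x = v @ w @ u")
    case True
    then obtain w where x: "x = v @ w @ u" by blast
    show ?thesis
    proof (cases "\<exists>w'. w = v' @ w' @ u'")
      case True
      then show ?thesis using x by (metis append.assoc sandwich_app)
    next
      case False
      then show ?thesis using x by (simp add: sandwich_app sandwich_outside)
    qed
  next
    case False
    then show ?thesis by (metis append.assoc sandwich_outside)
  qed
qed

lemma Flin_support_subset:
  "finite T \<Longrightarrow> {w. c w \<noteq> 0} \<subseteq> T \<Longrightarrow> Flin n g X c = (\<lambda>i j. \<Sum>w\<in>T. c w * Fpath n g X w i j)"
  unfolding Flin_def by (auto intro!: ext sum.mono_neutral_left)

lemma Flin_zero: "Flin n g X (\<lambda>_. 0) = (\<lambda>_ _. 0)"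
  by (simp add: Flin_def)

lemma finite_support_pvec: "finite {w'. pvec w w' \<noteq> 0}"
  by (simp add: pvec_def)

lemma Flin_pvec: "Flin n g X (pvec w) = Fpath n g X w"
  by (subst Flin_support_subset[of "{w}"]) (auto simp: pvec_def)

lemma Flin_pvec_diff:
  "Flin n g X (\<lambda>x. pvec w1 x - pvec w2 x) = (\<lambda>i j. Fpath n g X w1 i j - Fpath n g X w2 i j)"
  by (cases "w1 = w2") (simp_all add: Flin_zero, subst Flin_support_subset[of "{w1, w2}"], auto simp: pvec_def)

lemma Flin_add:
  assumes "finite {w. c w \<noteq> 0}" "finite {w. d w \<noteq> 0}"
  shows "Flin n g X (\<lambda>w. c w + d w) = (\<lambda>i j. Flin n g X c i j + Flin n g X d i j)"
proof -
  let ?T = "{w. c w \<noteq> 0} \<union> {w. d w \<noteq> 0}"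
  have "finite ?T" using assms by simp
  then show ?thesis
    by (subst (1 2 3) Flin_support_subset[of ?T]) (auto simp: distrib_right sum.distrib)
qed

lemma Flin_smult:
  assumes "finite {w. c w \<noteq> 0}"
  shows "Flin n g X (\<lambda>w. a * c w) = (\<lambda>i j. a * Flin n g X c i j)"
  using assms
  by (subst (1 2) Flin_support_subset[of "{w. c w \<noteq> 0}"]) (auto simp: sum_distrib_left mult.assoc)

lemma Flin_sum:
  assumes "finite K" "\<And>k. k \<in> K \<Longrightarrow> finite {w. c k w \<noteq> 0}"
  shows "finite {w. (\<Sum>k\<in>K. c k w) \<noteq> 0}
       \<and> Flin n g X (\<lambda>w. \<Sum>k\<in>K. c k w) = (\<lambda>i j. \<Sum>k\<in>K. Flin n g X (c k) i j)"
  using assms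
proof (induction K rule: finite_induct)
  case empty
  then show ?case by (simp add: Flin_zero)
next
  case (insert k K)
  have "{w. (\<Sum>k\<in>insert k K. c k w) \<noteq> 0} \<subseteq> {w. c k w \<noteq> 0} \<union> {w. (\<Sum>k\<in>K. c k w) \<noteq> 0}"
    using insert by auto
  then show ?case using insert by (auto simp: Flin_add intro: finite_subset)
qed

lemma kQ_sum:
  assumes "finite K" "\<And>k. k \<in> K \<Longrightarrow> c k \<in> kQ n g m X Y"
  shows "(\<lambda>w. \<Sum>k\<in>K. c k w) \<in> kQ n g m X Y"
proof -
  have "{w. (\<Sum>k\<in>K. c k w) \<noteq> 0} \<subseteq> (\<Union>k\<in>K. {w. c k w \<noteq> 0})"
    by (auto intro: ccontr)
  then show ?thesis using assms unfolding kQ_def by (auto intro: finite_subset)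
qed

lemma Flin_image_sum:
  assumes "finite K" "\<And>k. k \<in> K \<Longrightarrow> f k \<in> Flin n g X ` kQ n g m X Y"
  shows "(\<lambda>i j. \<Sum>k\<in>K. f k i j) \<in> Flin n g X ` kQ n g m X Y"
proof -
  have "\<forall>k\<in>K. \<exists>c. c \<in> kQ n g m X Y \<and> f k = Flin n g X c" using assms(2) by blast
  from bchoice[OF this] obtain c where c: "\<And>k. k \<in> K \<Longrightarrow> c k \<in> kQ n g m X Y \<and> f k = Flin n g X (c k)"
    by blast
  then have "Flin n g X (\<lambda>w. \<Sum>k\<in>K. c k w) = (\<lambda>i j. \<Sum>k\<in>K. f k i j)"
    using Flin_sum[OF assms(1), of c n g X] by (auto simp: kQ_def)
  moreover have "(\<lambda>w. \<Sum>k\<in>K. c k w) \<in> kQ n g m X Y" using kQ_sum[OF assms(1)] c by blast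
  ultimately show ?thesis by (rule image_eqI[OF sym])
qed

lemma is_path_src: "is_path n g m X Y w \<Longrightarrow> in_Q n g m X"
  by (cases w) (auto simp: valid_arrow_def)

lemma is_path_tgt: "is_path n g m X Y w \<Longrightarrow> in_Q n g m Y"
  by (induction n g m X Y w rule: is_path.induct) auto

lemma is_path_target_unique: "is_path n g m X Y w \<Longrightarrow> is_path n g m X Y' w \<Longrightarrow> Y = Y'"
  by (induction n g m X Y w arbitrary: Y' rule: is_path.induct) auto

lemma is_path_append:
  "is_path n g m X Y (v @ u) \<longleftrightarrow> (\<exists>Z. is_path n g m X Z v \<and> is_path n g m Z Y u)"
  by (induction v arbitrary: X) (auto dest: is_path_src)

lemma in_ideal_sum:
  "finite K \<Longrightarrow> (\<And>k. k \<in> K \<Longrightarrow> in_ideal n g m X Y (c k)) \<Longrightarrow> in_ideal n g m X Y (\<lambda>w. \<Sum>k\<in>K. c k w)"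
proof (induction K rule: finite_induct)
  case empty
  then show ?case by (simp add: in_ideal.zero)
next
  case (insert k K)
  then show ?case using in_ideal.add[of n g m X Y "c k" "\<lambda>w. \<Sum>k\<in>K. c k w"] by simp
qed

lemma in_ideal_sandwich:
  "in_ideal n g m Z Z' c \<Longrightarrow> is_path n g m X Z v \<Longrightarrow> is_path n g m Z' Y u
   \<Longrightarrow> in_ideal n g m X Y (sandwich v c u)"
proof (induction rule: in_ideal.induct)
  case zero
  then show ?case by (simp add: sandwich_zero in_ideal.zero)
next
  case (gen A B \<rho> v' u')
  have "is_path n g m X A (v @ v')" "is_path n g m B Y (u' @ u)"
    using gen is_path_append by blast+
  with gen(1) show ?case by (simp add: sandwich_sandwich in_ideal.gen)
next
  case (add c d)
  then show ?case by (simp add: sandwich_add in_ideal.add)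
next
  case (smult c a)
  then show ?case by (simp add: sandwich_smult in_ideal.smult)
qed

lemma in_ideal_rel_gen:
  assumes "(A, B, \<rho>) \<in> rel_gen n g m" "in_Q n g m A" "in_Q n g m B"
  shows "in_ideal n g m A B \<rho>"
  using in_ideal.gen[OF assms(1), of A "[]" B "[]"] assms(2,3) by (simp add: sandwich_Nil)

definition ideal_equiv ::
  "nat \<Rightarrow> nat \<Rightarrow> nat \<Rightarrow> nat \<times> nat \<Rightarrow> nat \<times> nat \<Rightarrow> (qarrow list \<Rightarrow> 'k::field) \<Rightarrow> (qarrow list \<Rightarrow> 'k) \<Rightarrow> bool"
  where "ideal_equiv n g m X Y c d \<longleftrightarrow> in_ideal n g m X Y (\<lambda>w. c w - d w)"

lemma ideal_equiv_refl: "ideal_equiv n g m X Y c c"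
  unfolding ideal_equiv_def using in_ideal.zero by simp

lemma ideal_equiv_trans:
  "ideal_equiv n g m X Y c d \<Longrightarrow> ideal_equiv n g m X Y d e \<Longrightarrow> ideal_equiv n g m X Y c e"
  unfolding ideal_equiv_def by (drule (1) in_ideal.add) simp

lemma in_ideal_equiv:
  "ideal_equiv n g m X Y c d \<Longrightarrow> in_ideal n g m X Y d \<Longrightarrow> in_ideal n g m X Y c"
  unfolding ideal_equiv_def by (drule (1) in_ideal.add) simp

lemma ideal_equiv_pvec_context:
  assumes "ideal_equiv n g m Z Z' (pvec w1 :: qarrow list \<Rightarrow> 'k::field) (pvec w2)"
    and "is_path n g m X Z v" "is_path n g m Z' Y u"
  shows "ideal_equiv n g m X Y (pvec (v @ w1 @ u) :: qarrow list \<Rightarrow> 'k) (pvec (v @ w2 @ u))"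
  using in_ideal_sandwich[OF assms[unfolded ideal_equiv_def]]
  unfolding ideal_equiv_def sandwich_diff sandwich_pvec .

lemma in_ideal_pvec_context:
  assumes "in_ideal n g m Z Z' (pvec w :: qarrow list \<Rightarrow> 'k::field)"
    and "is_path n g m X Z v" "is_path n g m Z' Y u"
  shows "in_ideal n g m X Y (pvec (v @ w @ u) :: qarrow list \<Rightarrow> 'k)"
  using in_ideal_sandwich[OF assms] by (simp add: sandwich_pvec)

lemma is_rep_hom_lincomb:
  assumes "is_rep_hom n g V W M1" "is_rep_hom n g V W M2"
  shows "is_rep_hom n g V W (\<lambda>i j. a * M1 i j + b * M2 i j)"
  using assms unfolding is_rep_hom_def up_map_def down_map_def fun_eq_iff
  by (smt (verit) mult_zero_right add.right_neutral)

lemma is_rep_hom_zero: "is_rep_hom n g V W (\<lambda>_ _. 0)"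
  unfolding is_rep_hom_def up_map_def down_map_def by (auto simp: fun_eq_iff)

lemma is_rep_hom_sum:
  "finite S \<Longrightarrow> (\<And>x. x \<in> S \<Longrightarrow> is_rep_hom n g V W (F x))
   \<Longrightarrow> is_rep_hom n g V W (\<lambda>i j. \<Sum>x\<in>S. a x * F x i j)"
proof (induction S rule: finite_induct)
  case empty
  then show ?case by (simp add: is_rep_hom_zero)
next
  case (insert x S)
  then show ?case using is_rep_hom_lincomb[of n g V W "F x" "\<lambda>i j. \<Sum>x\<in>S. a x * F x i j" "a x" 1]
    by simp
qed

locale rep_K =
  fixes n g :: nat
begin

abbreviation "N \<equiv> int (n + 1)"

lemma is_rep_homD_support:
  "is_rep_hom n g (p, q) (p', q') M \<Longrightarrow> M i j \<noteq> 0 \<Longrightarrow> p \<le> i \<and> i \<le> q \<and> p' \<le> j \<and> j \<le> q' \<and> i mod N = j mod N"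
  unfolding is_rep_hom_def by auto

lemma is_rep_homD_beta:
  "is_rep_hom n g (p, q) (p', q') M \<Longrightarrow> x < g \<Longrightarrow> p \<le> i \<Longrightarrow> i \<le> q \<Longrightarrow> i mod N = int x \<Longrightarrow>
   up_map p' q' (M i) = (if i < q then M (i + 1) else (\<lambda>_. 0))"
  unfolding is_rep_hom_def by auto

lemma is_rep_homD_alpha:
  "is_rep_hom n g (p, q) (p', q') M \<Longrightarrow> g \<le> x \<Longrightarrow> x \<le> n \<Longrightarrow> p \<le> i \<Longrightarrow> i \<le> q \<Longrightarrow>
   i mod N = int ((x + 1) mod (n + 1)) \<Longrightarrow> down_map p' q' (M i) = (if p < i then M (i - 1) else (\<lambda>_. 0))"
  unfolding is_rep_hom_def by auto

lemma mod_N_plus_1: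
  assumes "i mod N = int x"
  shows "(i + 1) mod N = int ((x + 1) mod (n + 1))"
proof -
  from assms have "(i + 1) mod N = (int x + 1) mod N" by (metis mod_add_left_eq)
  then show ?thesis by (simp add: of_nat_mod add.commute)
qed

lemma shift_mat_is_rep_hom:
  assumes "p \<le> p' + d" "p' + d \<le> q" "q \<le> q' + d" "d mod N = 0"
    and top: "int g \<le> q mod N" and bottom: "int g \<le> (p' - 1) mod N"
  shows "is_rep_hom n g (p, q) (p', q') (shift_mat d (p' + d) q :: int \<Rightarrow> int \<Rightarrow> 'k::field)"
  unfolding is_rep_hom_def fst_conv snd_conv
proof (intro conjI; intro ballI allI impI)
  fix i j assume "(shift_mat d (p' + d) q i j :: 'k) \<noteq> 0"
  then have "j = i - d" "p' + d \<le> i" "i \<le> q" by (auto simp: shift_mat_def split: if_splits)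
  moreover have "(i - d) mod N = i mod N" using \<open>d mod N = 0\<close> by (simp add: mod_diff_eq[symmetric])
  ultimately show "p \<le> i \<and> i \<le> q \<and> p' \<le> j \<and> j \<le> q' \<and> i mod N = j mod N" using assms by auto
next
  fix x i assume x: "x \<in> {0..<g}" and i: "p \<le> i \<and> i \<le> q \<and> i mod N = int x"
  have "i < q" using i x top by (cases "i = q") auto
  moreover have "i + 1 \<noteq> p' + d"
  proof
    assume "i + 1 = p' + d"
    then have "i = (p' - 1) + d" by simp
    then have "i mod N = ((p' - 1) + d mod N) mod N" by (simp add: mod_add_right_eq)
    then show False using i x bottom \<open>d mod N = 0\<close> by simp
  qed
  ultimately show "up_map p' q' (shift_mat d (p' + d) q i :: int \<Rightarrow> 'k) =
      (if i < q then shift_mat d (p' + d) q (i + 1) else (\<lambda>_. 0))"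
    using assms i by (auto simp: up_map_def shift_mat_def fun_eq_iff)
next
  fix x i assume "p \<le> i \<and> i \<le> q \<and> i mod N = int ((x + 1) mod (n + 1))"
  then show "down_map p' q' (shift_mat d (p' + d) q i :: int \<Rightarrow> 'k) =
      (if p < i then shift_mat d (p' + d) q (i - 1) else (\<lambda>_. 0))"
    using assms by (auto simp: down_map_def shift_mat_def fun_eq_iff)
qed

text \<open>Along a diagonal \<open>j = i - d\<close> the matrix of a morphism is constant where both rows are in range,
  since it commutes with the arrow between the vertices of \<open>i\<close> and \<open>i + 1\<close>.\<close>
lemma is_rep_hom_diagonal_step:
  assumes hom: "is_rep_hom n g (p, q) (p', q') M"
    and "p \<le> i" "i + 1 \<le> q" "p' \<le> i - d" "i + 1 - d \<le> q'"
  shows "M i (i - d) = M (i + 1) (i + 1 - d)"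
proof -
  define x where "x = nat (i mod N)"
  have ix: "i mod N = int x" unfolding x_def by simp
  have "i mod N < N" by simp
  then have xn: "x \<le> n" using ix by linarith
  show ?thesis
  proof (cases "x < g")
    case True
    have "up_map p' q' (M i) = M (i + 1)" using is_rep_homD_beta[OF hom True _ _ ix] assms by simp
    then have "up_map p' q' (M i) (i + 1 - d) = M (i + 1) (i + 1 - d)" by simp
    then show ?thesis using assms by (simp add: up_map_def)
  next
    case False
    have "down_map p' q' (M (i + 1)) = M i"
      using is_rep_homD_alpha[OF hom _ xn _ _ mod_N_plus_1[OF ix]] False assms by simp
    then have "down_map p' q' (M (i + 1)) (i - d) = M i (i - d)" by simp
    then show ?thesis using assms by (simp add: down_map_def algebra_simps)
  qed
qed

lemma is_rep_hom_diagonal_const: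
  assumes hom: "is_rep_hom n g (p, q) (p', q') M"
    and lo: "lo = max p (p' + d)" and "lo \<le> i" "i \<le> min q (q' + d)"
  shows "M i (i - d) = M lo (lo - d)"
  using assms(3,4)
proof (induction i rule: int_ge_induct)
  case base
  then show ?case by simp
next
  case (step i)
  then have "M i (i - d) = M (i + 1) (i + 1 - d)"
    using lo by (intro is_rep_hom_diagonal_step[OF hom]) auto
  then show ?case using step by simp
qed

definition diag_part :: "(int \<Rightarrow> int \<Rightarrow> 'k::zero) \<Rightarrow> int \<Rightarrow> int \<Rightarrow> int \<Rightarrow> 'k" where
  "diag_part M d = (\<lambda>i j. if j = i - d then M i j else 0)"

lemma is_rep_hom_sum_diag_part:
  assumes hom: "is_rep_hom n g (p, q) (p', q') M"
  obtains K where "finite K" "M = (\<lambda>i j. \<Sum>k\<in>K. diag_part M (N * k) i j)"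
proof -
  define B where "B = \<bar>p\<bar> + \<bar>q\<bar> + \<bar>p'\<bar> + \<bar>q'\<bar>"
  have "M i j = (\<Sum>k\<in>{-B..B}. diag_part M (N * k) i j)" for i j
  proof (cases "M i j = 0")
    case True
    have "(if j = i - N * k then M i j else 0) = 0" for k by (simp only: True if_cancel)
    with True show ?thesis by (simp add: diag_part_def)
  next
    case False
    note supp = is_rep_homD_support[OF hom False]
    define k0 where "k0 = (i - j) div N"
    have "(i - j) mod N = 0" using supp by (simp add: mod_diff_eq[symmetric])
    then have k0: "i - j = N * k0" unfolding k0_def by (metis mult_div_mod_eq add.right_neutral)
    have "\<bar>k0\<bar> \<le> \<bar>N * k0\<bar>" by (simp add: abs_mult mult_le_cancel_right1)
    also have "\<dots> \<le> B" using k0 supp unfolding B_def by linarith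
    finally have "k0 \<in> {-B..B}" by auto
    moreover have "j = i - N * k \<longleftrightarrow> k = k0" for k using k0 by auto
    ultimately show ?thesis by (simp add: diag_part_def)
  qed
  then show ?thesis using that[of "{-B..B}"] by auto
qed

lemma diag_part_lower_bound:
  assumes hom: "is_rep_hom n g (p, q) (p', q') M"
    and alpha: "\<exists>x\<in>{g..n}. p mod N = int ((x + 1) mod (n + 1))"
    and nz: "M i0 (i0 - d) \<noteq> 0"
  shows "p \<le> p' + d"
proof (rule ccontr)
  assume "\<not> p \<le> p' + d"
  moreover have "p \<le> i0" "i0 \<le> min q (q' + d)" using is_rep_homD_support[OF hom nz] by auto
  ultimately have "M p (p - d) \<noteq> 0"
    using nz is_rep_hom_diagonal_const[OF hom, of p d i0] by simp
  then have "p - d \<le> q'" using is_rep_homD_support[OF hom] by blast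
  obtain x where x: "g \<le> x" "x \<le> n" "p mod N = int ((x + 1) mod (n + 1))" using alpha by auto
  have "down_map p' q' (M p) = (\<lambda>_. 0)"
    using is_rep_homD_alpha[OF hom x(1,2) _ _ x(3)] is_rep_homD_support[OF hom nz] by simp
  then have "down_map p' q' (M p) (p - d - 1) = 0" by simp
  then have "M p (p - d) = 0" using \<open>\<not> p \<le> p' + d\<close> \<open>p - d \<le> q'\<close> by (simp add: down_map_def)
  with \<open>M p (p - d) \<noteq> 0\<close> show False by simp
qed

lemma diag_part_upper_bound:
  assumes hom: "is_rep_hom n g (p, q) (p', q') M"
    and top: "int g \<le> q' mod N"
    and nz: "M i0 (i0 - N * k) \<noteq> 0"
  shows "q \<le> q' + N * k"
proof (rule ccontr)
  assume "\<not> q \<le> q' + N * k"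
  define i where "i = q' + N * k"
  have "max p (p' + N * k) \<le> i0" "i0 \<le> i" using is_rep_homD_support[OF hom nz] by (auto simp: i_def)
  then have Mi: "M i (i - N * k) \<noteq> 0"
    using nz is_rep_hom_diagonal_const[OF hom, of "max p (p' + N * k)" "N * k" i0]
      is_rep_hom_diagonal_const[OF hom, of "max p (p' + N * k)" "N * k" i]
      \<open>\<not> q \<le> q' + N * k\<close> by (simp add: i_def)
  define x where "x = nat (i mod N)"
  have ix: "i mod N = int x" unfolding x_def by simp
  have "i mod N < N" by simp
  then have xn: "x \<le> n" using ix by linarith
  have "g \<le> x" using ix top by (simp add: i_def)
  have "down_map p' q' (M (i + 1)) = M i"
    using is_rep_homD_alpha[OF hom \<open>g \<le> x\<close> xn _ _ mod_N_plus_1[OF ix]] is_rep_homD_support[OF hom Mi]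
      \<open>\<not> q \<le> q' + N * k\<close> by (simp add: i_def)
  then have "down_map p' q' (M (i + 1)) q' = M i q'" by simp
  then have "M i q' = 0" by (simp add: down_map_def)
  with Mi show False by (simp add: i_def)
qed

lemma diag_part_eq_shift_mat:
  assumes hom: "is_rep_hom n g (p, q) (p', q') M"
    and alpha: "\<exists>x\<in>{g..n}. p mod N = int ((x + 1) mod (n + 1))"
    and top: "int g \<le> q' mod N"
    and nz: "M i0 (i0 - N * k) \<noteq> 0"
  shows "p \<le> p' + N * k \<and> p' + N * k \<le> q \<and> q \<le> q' + N * k
    \<and> diag_part M (N * k) = (\<lambda>i j. M i0 (i0 - N * k) * shift_mat (N * k) (p' + N * k) q i j)"
proof -
  have lo: "p \<le> p' + N * k" by (rule diag_part_lower_bound[OF hom alpha nz])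
  have hi: "q \<le> q' + N * k" by (rule diag_part_upper_bound[OF hom top nz])
  have i0: "p' + N * k \<le> i0" "i0 \<le> q" using is_rep_homD_support[OF hom nz] by auto
  have "diag_part M (N * k) i j = M i0 (i0 - N * k) * shift_mat (N * k) (p' + N * k) q i j" for i j
  proof (cases "p' + N * k \<le> i \<and> i \<le> q")
    case True
    then have "M i (i - N * k) = M i0 (i0 - N * k)"
      using is_rep_hom_diagonal_const[OF hom, of "p' + N * k" "N * k"] lo hi i0 by simp
    then show ?thesis using True by (simp add: diag_part_def shift_mat_def)
  next
    case False
    then have "M i (i - N * k) = 0" using is_rep_homD_support[OF hom, of i "i - N * k"] by fastforce
    with False show ?thesis by (auto simp: diag_part_def shift_mat_def)
  qed
  with lo hi i0 show ?thesis by auto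
qed

end

definition qq_sum :: "nat \<Rightarrow> nat \<Rightarrow> nat \<Rightarrow> int" where
  "qq_sum n g t = int g + int (t mod hh n g) + int (n + 1) * int (t div hh n g)"

text \<open>The lowest basis vector of \<open>V\<^sub>(\<^sub>r\<^sub>,\<^sub>s\<^sub>)\<close> not killed by a run of \<open>b\<close> arrows \<open>\<pi>\<close>
  has index \<open>pp_periodic n g (s + b)\<close>.\<close>
definition pp_periodic :: "nat \<Rightarrow> nat \<Rightarrow> nat \<Rightarrow> int" where
  "pp_periodic n g j = pp g (j mod hh n g) + int (n + 1) * int (j div hh n g)"

lemma qq_eq_qq_sum: "qq n g r s = qq_sum n g (r + s)"
  by (simp add: qq_def qq_sum_def)

lemma Fobj_eq: "Fobj n g (r, s) = (pp g s, qq_sum n g (r + s))"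
  by (simp add: Fobj_def qq_eq_qq_sum)

lemma pp_nonneg: "0 \<le> pp g x"
  by (simp add: pp_def)

lemma pp_le: "pp g x \<le> int g + int x"
  by (simp add: pp_def)

lemma pp_strict_mono: "strict_mono (pp g)"
  by (simp add: strict_mono_Suc_iff pp_def)

locale tube = rep_K +
  fixes m :: nat
  assumes g_pos: "1 \<le> g" and g_le_n: "g \<le> n"
begin

abbreviation "h \<equiv> hh n g"

lemma h_pos: "0 < h"
  using g_le_n by (simp add: hh_def)

lemma g_plus_h: "g + h = n + 1"
  using g_le_n by (simp add: hh_def)

lemma pp_less_N: "x < h \<Longrightarrow> pp g x < N"
  using g_plus_h by (simp add: pp_def)

lemma qq_sum_decomp: "x < h \<Longrightarrow> qq_sum n g (h * d + x) = int g + int x + N * int d"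
  by (simp add: qq_sum_def)

lemma pp_periodic_decomp: "x < h \<Longrightarrow> pp_periodic n g (h * d + x) = pp g x + N * int d"
  by (simp add: pp_periodic_def)

lemma qq_sum_small: "s < h \<Longrightarrow> qq_sum n g s = int g + int s"
  by (simp add: qq_sum_def)

lemma pp_periodic_small: "s < h \<Longrightarrow> pp_periodic n g s = pp g s"
  by (simp add: pp_periodic_def)

lemma qq_sum_add_mult: "qq_sum n g (t + h * k) = qq_sum n g t + N * int k"
proof -
  have "t + h * k = h * (t div h + k) + t mod h" by (simp add: algebra_simps)
  then show ?thesis
    using qq_sum_decomp[of "t mod h" "t div h + k"] qq_sum_decomp[of "t mod h" "t div h"] h_pos
    by (simp add: algebra_simps)
qed

lemma pp_periodic_add_mult: "pp_periodic n g (t + h * k) = pp_periodic n g t + N * int k"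
proof -
  have "t + h * k = h * (t div h + k) + t mod h" by (simp add: algebra_simps)
  then show ?thesis
    using pp_periodic_decomp[of "t mod h" "t div h + k"] pp_periodic_decomp[of "t mod h" "t div h"] h_pos
    by (simp add: algebra_simps)
qed

lemma qq_sum_mod_ge: "int g \<le> qq_sum n g t mod N"
proof -
  have "t mod h < h" using h_pos by simp
  then have "int g + int (t mod h) < N" using g_plus_h by linarith
  moreover have "qq_sum n g t = (int g + int (t mod h)) + N * int (t div h)"
    by (simp add: qq_sum_def)
  ultimately show ?thesis by simp
qed

lemma pp_periodic_le_qq_sum: "pp_periodic n g t \<le> qq_sum n g t"
  using pp_le[of g "t mod h"] by (simp add: pp_periodic_def qq_sum_def)

lemma qq_sum_less_pp_periodic_Suc: "qq_sum n g t < pp_periodic n g (Suc t)"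
proof -
  define d x where "d = t div h" and "x = t mod h"
  have t: "t = h * d + x" and x: "x < h" using h_pos by (simp_all add: d_def x_def)
  show ?thesis
  proof (cases "Suc x < h")
    case True
    then show ?thesis
      using pp_periodic_decomp[OF True, of d] qq_sum_decomp[OF x, of d] t by (simp add: pp_def)
  next
    case False
    then have "Suc t = h * Suc d + 0" and "Suc x = h" using t x by simp_all
    then have "pp_periodic n g (Suc t) = N * int (Suc d)"
      using pp_periodic_decomp[of 0 "Suc d"] h_pos by (simp add: pp_def)
    moreover have "qq_sum n g t = int g + int x + N * int d" using qq_sum_decomp[OF x] t by simp
    ultimately show ?thesis using \<open>Suc x = h\<close> g_plus_h by (simp add: algebra_simps)
  qed
qed

lemma strict_mono_qq_sum: "strict_mono (qq_sum n g)"
  unfolding strict_mono_Suc_iff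
  using qq_sum_less_pp_periodic_Suc pp_periodic_le_qq_sum by (blast intro: less_le_trans)

lemma strict_mono_pp_periodic: "strict_mono (pp_periodic n g)"
  unfolding strict_mono_Suc_iff
  using qq_sum_less_pp_periodic_Suc pp_periodic_le_qq_sum by (blast intro: le_less_trans)

lemma pp_periodic_le_qq_sum_iff: "pp_periodic n g j \<le> qq_sum n g t \<longleftrightarrow> j \<le> t"
proof
  assume "j \<le> t"
  then show "pp_periodic n g j \<le> qq_sum n g t"
    using pp_periodic_le_qq_sum[of j] strict_mono_less_eq[OF strict_mono_qq_sum, of j t] by linarith
next
  assume "pp_periodic n g j \<le> qq_sum n g t"
  then have "pp_periodic n g j < pp_periodic n g (Suc t)"
    using qq_sum_less_pp_periodic_Suc[of t] by linarith
  then show "j \<le> t" using strict_mono_less[OF strict_mono_pp_periodic] by simp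
qed

lemma Farr_Rho: "Farr n g (Rho r s) = shift_mat 0 (pp g s) (qq_sum n g (r + s))"
  by (auto simp: shift_mat_def qq_eq_qq_sum fun_eq_iff)

lemma Farr_Pi_0: "Farr n g (Pi r 0) = shift_mat N N (qq_sum n g (r + h))"
proof -
  have "r + 1 + (h - 1) = r + h" using h_pos by simp
  then show ?thesis by (auto simp: shift_mat_def qq_eq_qq_sum fun_eq_iff)
qed

lemma Farr_Pi_pos: "s \<noteq> 0 \<Longrightarrow> Farr n g (Pi r s) = shift_mat 0 (pp g s) (qq_sum n g (r + s))"
  by (auto simp: shift_mat_def qq_eq_qq_sum fun_eq_iff)

declare Farr.simps [simp del]

lemma Farr_nonzero_row:
  assumes "Farr n g a i j \<noteq> 0" "snd (qsrc n g a) < h"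
  shows "fst (Fobj n g (qsrc n g a)) \<le> i \<and> i \<le> snd (Fobj n g (qsrc n g a))"
proof (cases a)
  case (Rho r s)
  then show ?thesis using assms by (auto simp: Fobj_eq Farr_Rho shift_mat_def split: if_splits)
next
  case (Pi r s)
  have "r + 1 + (h - 1) = r + h" using h_pos by simp
  moreover have "pp g (h - 1) \<le> N" using pp_less_N[of "h - 1"] h_pos by simp
  moreover have "s \<noteq> 0 \<Longrightarrow> pp g (s - 1) \<le> pp g s"
    using strict_mono_less_eq[OF pp_strict_mono[of g], of "s - 1" s] by simp
  ultimately show ?thesis using assms Pi
    by (cases "s = 0") (auto simp: Fobj_eq Farr_Pi_0 Farr_Pi_pos shift_mat_def split: if_splits)
qed

lemma Fpath_nonzero_row:
  assumes "is_path n g m X Y w" "(Fpath n g X w i l :: 'k::field) \<noteq> 0"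
  shows "fst (Fobj n g X) \<le> i \<and> i \<le> snd (Fobj n g X)"
proof (cases w)
  case Nil
  then show ?thesis using assms by (auto simp: midentity_def split: if_splits)
next
  case (Cons a w')
  then have "mcomp (Fobj n g (qtgt n g a)) (Farr n g a) (Fpath n g (qtgt n g a) w') i l \<noteq> (0::'k)"
    using assms by simp
  then obtain j where "(Farr n g a i j :: 'k) \<noteq> 0" using mcomp_nonzero_row by blast
  moreover have "qsrc n g a = X" "snd X < h" using assms Cons by (auto simp: valid_arrow_def in_Q_def)
  ultimately show ?thesis using Farr_nonzero_row by metis
qed

lemma Fpath_append:
  "is_path n g m X Z v \<Longrightarrow> is_path n g m Z Y u \<Longrightarrow>
   Fpath n g X (v @ u) = mcomp (Fobj n g Z) (Fpath n g X v) (Fpath n g Z u :: int \<Rightarrow> int \<Rightarrow> 'k::field)"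
proof (induction v arbitrary: X)
  case Nil
  then have "X = Z" by simp
  moreover have "mcomp (Fobj n g Z) (midentity (Fobj n g Z)) (Fpath n g Z u :: int \<Rightarrow> int \<Rightarrow> 'k)
      = Fpath n g Z u"
    by (rule mcomp_midentity_left) (use Fpath_nonzero_row Nil.prems(2) in blast)
  ultimately show ?case by simp
next
  case (Cons a v)
  then show ?case by (simp add: mcomp_assoc)
qed

section \<open>Canonical paths\<close>

lemma splus_less: "splus n g s < h"
  using h_pos by (simp add: splus_def)

lemma splus_eq_Suc_mod: "s < h \<Longrightarrow> splus n g s = Suc s mod h"
  by (cases "Suc s < h") (auto simp: splus_def not_less_eq less_Suc_eq)

lemma qsrc_Pi_splus: "s < h \<Longrightarrow> qsrc n g (Pi r (splus n g s)) = (r + 1, s)"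
  by (auto simp: splus_def)

fun pi_run :: "nat \<Rightarrow> nat \<Rightarrow> nat \<Rightarrow> qarrow list" where
  "pi_run r s 0 = []"
| "pi_run r s (Suc b) = Pi (r - 1) (splus n g s) # pi_run (r - 1) (splus n g s) b"

fun rho_run :: "nat \<Rightarrow> nat \<Rightarrow> nat \<Rightarrow> qarrow list" where
  "rho_run r s 0 = []"
| "rho_run r s (Suc a) = Rho r s # rho_run (Suc r) s a"

lemma length_pi_run: "length (pi_run r s b) = b"
  by (induction b arbitrary: r s) auto

lemma length_rho_run: "length (rho_run r s a) = a"
  by (induction a arbitrary: r) auto

lemma is_path_pi_run:
  "in_Q n g m (r, s) \<Longrightarrow> b \<le> r \<Longrightarrow> is_path n g m (r, s) (r - b, (s + b) mod h) (pi_run r s b)"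
proof (induction b arbitrary: r s)
  case 0
  then show ?case by (simp add: in_Q_def)
next
  case (Suc b)
  let ?s = "splus n g s"
  have s: "s < h" and r: "1 \<le> r" using Suc.prems by (auto simp: in_Q_def)
  have "?s \<le> Suc s" by (simp add: splus_def)
  then have Q: "in_Q n g m (r - 1, ?s)" using Suc.prems r splus_less by (auto simp: in_Q_def)
  then have "valid_arrow n g m (Pi (r - 1) ?s)"
    using Suc.prems r qsrc_Pi_splus[OF s, of "r - 1"] by (simp add: valid_arrow_def)
  moreover have "(?s + b) mod h = (s + Suc b) mod h"
    using splus_eq_Suc_mod[OF s] by (simp add: mod_add_left_eq)
  ultimately show ?case using Suc.IH[OF Q] Suc.prems qsrc_Pi_splus[OF s, of "r - 1"] r by simp
qed

lemma is_path_rho_run: "in_Q n g m (r + a, s) \<Longrightarrow> is_path n g m (r, s) (r + a, s) (rho_run r s a)"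
proof (induction a arbitrary: r)
  case 0
  then show ?case by simp
next
  case (Suc a)
  then have "valid_arrow n g m (Rho r s)" by (simp add: valid_arrow_def in_Q_def)
  with Suc show ?case using Suc.IH[of "Suc r"] by simp
qed

lemma rho_run_snoc: "rho_run r s a @ [Rho (r + a) s] = rho_run r s (Suc a)"
proof (induction a arbitrary: r)
  case 0
  then show ?case by simp
next
  case (Suc a)
  then show ?case using Suc.IH[of "Suc r"] by simp
qed

lemma pi_run_snoc:
  "s < h \<Longrightarrow> pi_run r s b @ [Pi (r - b - 1) (splus n g ((s + b) mod h))] = pi_run r s (Suc b)"
proof (induction b arbitrary: r s)
  case 0
  then show ?case by simp
next
  case (Suc b)
  let ?s = "splus n g s"
  have "(?s + b) mod h = (s + Suc b) mod h"
    using splus_eq_Suc_mod[OF Suc.prems] by (simp add: mod_add_left_eq)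
  moreover have "r - Suc b - 1 = r - 1 - b - 1" by simp
  ultimately have "pi_run r s (Suc b) @ [Pi (r - Suc b - 1) (splus n g ((s + Suc b) mod h))] =
     Pi (r - 1) ?s # (pi_run (r - 1) ?s b @ [Pi (r - 1 - b - 1) (splus n g ((?s + b) mod h))])"
    by (simp only: pi_run.simps append_Cons)
  then show ?case by (simp only: Suc.IH[OF splus_less] pi_run.simps)
qed

lemma Fpath_rho_run: "s < h \<Longrightarrow> Fpath n g (r, s) (rho_run r s a) = shift_mat 0 (pp g s) (qq_sum n g (r + s))"
proof (induction a arbitrary: r)
  case 0
  then show ?case by (simp add: midentity_eq_shift_mat Fobj_eq)
next
  case (Suc a)
  have "qq_sum n g (r + s) \<le> qq_sum n g (Suc r + s)"
    using strict_mono_less_eq[OF strict_mono_qq_sum] by simp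
  then show ?case using Suc by (simp add: Fobj_eq Farr_Rho mcomp_shift_mat)
qed

lemma Fpath_pi_run:
  "s < h \<Longrightarrow> b \<le> r \<Longrightarrow> (Fpath n g (r, s) (pi_run r s b) :: int \<Rightarrow> int \<Rightarrow> 'k::field) =
     shift_mat (N * int ((s + b) div h)) (pp_periodic n g (s + b)) (qq_sum n g (r + s))"
proof (induction b arbitrary: r s)
  case 0
  then show ?case by (simp add: midentity_eq_shift_mat Fobj_eq pp_periodic_small)
next
  case (Suc b)
  then obtain r1 where r: "r = Suc r1" by (cases r) auto
  let ?s = "splus n g s"
  have IH: "(Fpath n g (r1, ?s) (pi_run r1 ?s b) :: int \<Rightarrow> int \<Rightarrow> 'k) =
      shift_mat (N * int ((?s + b) div h)) (pp_periodic n g (?s + b)) (qq_sum n g (r1 + ?s))"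
    using Suc.IH[OF splus_less] Suc.prems r by simp
  have unfold: "(Fpath n g (r, s) (pi_run r s (Suc b)) :: int \<Rightarrow> int \<Rightarrow> 'k) =
     mcomp (Fobj n g (r1, ?s)) (Farr n g (Pi r1 ?s))
       (shift_mat (N * int ((?s + b) div h)) (pp_periodic n g (?s + b)) (qq_sum n g (r1 + ?s)))"
    using IH r by simp
  show ?case
  proof (cases "Suc s < h")
    case True
    then have s: "?s = Suc s" by (simp add: splus_def)
    have "pp g (Suc s) \<le> pp_periodic n g (s + Suc b)"
      using strict_mono_less_eq[OF strict_mono_pp_periodic, of "Suc s" "s + Suc b"]
        pp_periodic_small[OF True] by simp
    then show ?thesis unfolding unfold s using True r
      by (simp add: Fobj_eq Farr_Pi_pos mcomp_shift_mat)
  next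
    case False
    then have h: "Suc s = h" using Suc.prems by simp
    then have s: "?s = 0" by (simp add: splus_def)
    have rs: "r1 + h = r + s" using r h by simp
    have sb: "s + Suc b = b + h * 1" using h by simp
    have "(b + h * 1) div h = b div h + 1" using h_pos by simp
    moreover have "pp_periodic n g (b + h * 1) = pp_periodic n g b + N"
      using pp_periodic_add_mult[of b 1] by simp
    moreover have "1 + (int n + qq_sum n g r1) = qq_sum n g (r + s)"
      using qq_sum_add_mult[of r1 1] rs by (simp add: algebra_simps)
    moreover have "0 \<le> pp_periodic n g b" by (simp add: pp_periodic_def pp_nonneg)
    ultimately show ?thesis unfolding unfold s sb using rs h
      by (simp add: Fobj_eq Farr_Pi_0 mcomp_shift_mat pp_def algebra_simps)
  qed
qed

text \<open>A path from \<open>(r, s)\<close> to \<open>(r', s')\<close> made of \<open>b\<close> arrows \<open>\<pi>\<close> followed by arrows \<open>\<rho>\<close>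
  exists iff \<open>b \<in> canon_exps r s r' s'\<close>; the number of \<open>\<rho>\<close>'s is then \<open>r' + b - r\<close>.\<close>
definition canon_path :: "nat \<Rightarrow> nat \<Rightarrow> nat \<Rightarrow> nat \<Rightarrow> qarrow list" where
  "canon_path r s r' b = pi_run r s b @ rho_run (r - b) ((s + b) mod h) (r' + b - r)"

definition canon_exps :: "nat \<Rightarrow> nat \<Rightarrow> nat \<Rightarrow> nat \<Rightarrow> nat set" where
  "canon_exps r s r' s' = {b. b \<le> r \<and> (s + b) mod h = s' \<and> r \<le> r' + b}"

lemma canon_path_inj:
  assumes "b \<in> canon_exps r s r' s'" "b' \<in> canon_exps r s r' s'" "canon_path r s r' b = canon_path r s r' b'"
  shows "b = b'"
proof -
  have "length (canon_path r s r' b) = length (canon_path r s r' b')" using assms(3) by simp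
  then have "b + (r' + b - r) = b' + (r' + b' - r)"
    by (simp add: canon_path_def length_pi_run length_rho_run)
  with assms(1,2) show ?thesis unfolding canon_exps_def by (elim CollectE conjE) arith
qed

lemma
  assumes "in_Q n g m (r, s)" "in_Q n g m (r', s')" "b \<in> canon_exps r s r' s'"
  shows is_path_canon_path: "is_path n g m (r, s) (r', s') (canon_path r s r' b)"
    and Fpath_canon_path: "(Fpath n g (r, s) (canon_path r s r' b) :: int \<Rightarrow> int \<Rightarrow> 'k::field) =
      shift_mat (N * int ((s + b) div h)) (pp_periodic n g (s + b)) (qq_sum n g (r + s))"
proof -
  let ?s = "(s + b) mod h" and ?a = "r' + b - r"
  have b: "b \<le> r" "?s = s'" "r - b + ?a = r'" using assms(3) by (auto simp: canon_exps_def)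
  have s: "s < h" using assms(1) by (simp add: in_Q_def)
  have p1: "is_path n g m (r, s) (r - b, ?s) (pi_run r s b)" by (rule is_path_pi_run[OF assms(1) b(1)])
  have p2: "is_path n g m (r - b, ?s) (r', s') (rho_run (r - b) ?s ?a)"
    using is_path_rho_run[of "r - b" ?a ?s] assms(2) b by simp
  from p1 p2 show "is_path n g m (r, s) (r', s') (canon_path r s r' b)"
    unfolding canon_path_def is_path_append by blast
  have "r - b + ?s + h * ((s + b) div h) = r + s" using b(1)
    by (metis add.assoc div_mult_mod_eq le_add_diff_inverse2 add.commute mult.commute)
  then have q: "qq_sum n g (r - b + ?s) + N * int ((s + b) div h) = qq_sum n g (r + s)"
    by (metis qq_sum_add_mult)
  have pp: "pp g ?s + N * int ((s + b) div h) = pp_periodic n g (s + b)"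
    by (simp add: pp_periodic_def)
  show "(Fpath n g (r, s) (canon_path r s r' b) :: int \<Rightarrow> int \<Rightarrow> 'k::field) =
      shift_mat (N * int ((s + b) div h)) (pp_periodic n g (s + b)) (qq_sum n g (r + s))"
    unfolding canon_path_def Fpath_append[OF p1 p2] Fpath_pi_run[OF s b(1)]
      Fpath_rho_run[OF mod_less_divisor[OF h_pos]]
    by (simp only: Fobj_eq mcomp_shift_mat fst_conv snd_conv q pp) simp
qed

section \<open>The relations hold in the image\<close>

lemma Fpath_commutation_relation:
  assumes "s < h"
  shows "(Fpath n g (r + 1, s) [Rho (r + 1) s, Pi (r + 1) (splus n g s)] :: int \<Rightarrow> int \<Rightarrow> 'k::field)
       = Fpath n g (r + 1, s) [Pi r (splus n g s), Rho r (splus n g s)]"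
proof (cases "Suc s < h")
  case True
  then have s: "splus n g s = Suc s" by (simp add: splus_def)
  have "qq_sum n g (Suc (r + s)) \<le> qq_sum n g (Suc (Suc (r + s)))"
    using strict_mono_less_eq[OF strict_mono_qq_sum] by simp
  moreover have "pp g s \<le> pp g (Suc s)"
    using strict_mono_less_eq[OF pp_strict_mono[of g], of s "Suc s"] by simp
  ultimately show ?thesis unfolding s
    by (simp add: Farr_Rho Farr_Pi_pos midentity_eq_shift_mat mcomp_shift_mat Fobj_eq)
next
  case False
  then have h: "Suc s = h" using assms by simp
  then have s: "splus n g s = 0" by (simp add: splus_def)
  have "Suc (r + s) = r + h * 1" "Suc (Suc (r + s)) = Suc r + h * 1" using h by simp_all
  then have "qq_sum n g (Suc (r + s)) = qq_sum n g r + N"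
    "qq_sum n g (Suc (Suc (r + s))) = qq_sum n g (Suc r) + N"
    by (simp_all only: qq_sum_add_mult) simp_all
  moreover have "qq_sum n g (r + h) = qq_sum n g r + N" "qq_sum n g (Suc (r + h)) = qq_sum n g (Suc r) + N"
    using qq_sum_add_mult[of "Suc r" 1] qq_sum_add_mult[of r 1] by auto
  moreover have "qq_sum n g r \<le> qq_sum n g (Suc r)"
    using strict_mono_less_eq[OF strict_mono_qq_sum] by simp
  moreover have "pp g s \<le> N" using pp_less_N[OF assms] by simp
  ultimately show ?thesis unfolding s
    by (simp add: Farr_Rho Farr_Pi_0 midentity_eq_shift_mat mcomp_shift_mat Fobj_eq pp_def algebra_simps)
qed

lemma Fpath_zero_relation:
  assumes "s < h"
  shows "(Fpath n g (0, s) [Rho 0 s, Pi 0 (splus n g s)] :: int \<Rightarrow> int \<Rightarrow> 'k::field) = (\<lambda>_ _. 0)"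
proof (cases "Suc s < h")
  case True
  then have "splus n g s = Suc s" by (simp add: splus_def)
  moreover have "qq_sum n g s < pp g (Suc s)" using qq_sum_small[OF assms] by (simp add: pp_def)
  ultimately show ?thesis
    by (simp add: Farr_Rho Farr_Pi_pos midentity_eq_shift_mat mcomp_shift_mat Fobj_eq shift_mat_empty)
next
  case False
  then have h: "Suc s = h" using assms by simp
  then have "splus n g s = 0" by (simp add: splus_def)
  moreover have "qq_sum n g s < N" using qq_sum_small[OF assms] h g_plus_h by simp
  ultimately show ?thesis
    by (simp add: Farr_Rho Farr_Pi_0 midentity_eq_shift_mat mcomp_shift_mat Fobj_eq shift_mat_empty)
qed

lemma rel_gen_cases:
  assumes "(A, B, \<rho>) \<in> rel_gen n g m"
  obtains (commutation) r s where "s < h" "A = (r + 1, s)" "B = (r + 1, splus n g s)"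
    "valid_arrow n g m (Rho (r + 1) s)" "valid_arrow n g m (Pi (r + 1) (splus n g s))"
    "valid_arrow n g m (Pi r (splus n g s))" "valid_arrow n g m (Rho r (splus n g s))"
    "\<rho> = (\<lambda>w. pvec [Rho (r + 1) s, Pi (r + 1) (splus n g s)] w - pvec [Pi r (splus n g s), Rho r (splus n g s)] w)"
  | (zero) s where "s < h" "A = (0, s)" "B = (0, splus n g s)"
    "valid_arrow n g m (Rho 0 s)" "valid_arrow n g m (Pi 0 (splus n g s))"
    "\<rho> = pvec [Rho 0 s, Pi 0 (splus n g s)]"
  using assms unfolding rel_gen_def by blast

lemma Fpath_sandwich:
  assumes "is_path n g m X A v" "is_path n g m A B w" "is_path n g m B Y u"
  shows "(Fpath n g X (v @ w @ u) :: int \<Rightarrow> int \<Rightarrow> 'k::field) =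
    mcomp (Fobj n g A) (Fpath n g X v) (mcomp (Fobj n g B) (Fpath n g A w) (Fpath n g B u))"
proof -
  have "is_path n g m A Y (w @ u)" using assms(2,3) is_path_append by blast
  then show ?thesis using assms by (simp add: Fpath_append)
qed

lemma Flin_sandwich_rel_gen:
  assumes "(A, B, \<rho>) \<in> rel_gen n g m" "is_path n g m X A v" "is_path n g m B Y u"
  shows "finite {w. sandwich v \<rho> u w \<noteq> 0} \<and> Flin n g X (sandwich v \<rho> u) = (\<lambda>_ _. 0 :: 'k::field)"
  using assms(1)
proof (cases rule: rel_gen_cases)
  case (commutation r s)
  let ?w1 = "[Rho (r + 1) s, Pi (r + 1) (splus n g s)]" and ?w2 = "[Pi r (splus n g s), Rho r (splus n g s)]"
  have p1: "is_path n g m A B ?w1" and p2: "is_path n g m A B ?w2"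
    using commutation qsrc_Pi_splus[of s] by (simp_all add: valid_arrow_def)
  have "(Fpath n g X (v @ ?w1 @ u) :: int \<Rightarrow> int \<Rightarrow> 'k) = Fpath n g X (v @ ?w2 @ u)"
    unfolding Fpath_sandwich[OF assms(2) p1 assms(3)] Fpath_sandwich[OF assms(2) p2 assms(3)]
    using Fpath_commutation_relation[where 'k='k, of s r] commutation(1-3) by simp
  moreover have "sandwich v \<rho> u = (\<lambda>x. pvec (v @ ?w1 @ u) x - pvec (v @ ?w2 @ u) x)"
    unfolding commutation sandwich_diff sandwich_pvec by simp
  moreover have "{x. pvec (v @ ?w1 @ u) x - (pvec (v @ ?w2 @ u) x :: 'k) \<noteq> 0} \<subseteq> {v @ ?w1 @ u, v @ ?w2 @ u}"
    by (auto simp: pvec_def)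
  ultimately show ?thesis by (auto simp: Flin_pvec_diff intro: finite_subset)
next
  case (zero s)
  let ?w = "[Rho 0 s, Pi 0 (splus n g s)]"
  have p: "is_path n g m A B ?w" using zero qsrc_Pi_splus[of s] by (simp add: valid_arrow_def)
  have "(Fpath n g X (v @ ?w @ u) :: int \<Rightarrow> int \<Rightarrow> 'k) = (\<lambda>_ _. 0)"
    unfolding Fpath_sandwich[OF assms(2) p assms(3)]
    using Fpath_zero_relation[where 'k='k, of s] zero(1-3) by (simp add: mcomp_zero_left mcomp_zero_right)
  moreover have "sandwich v \<rho> u = pvec (v @ ?w @ u)" unfolding zero sandwich_pvec by simp
  moreover have "{x. (pvec (v @ ?w @ u) x :: 'k) \<noteq> 0} \<subseteq> {v @ ?w @ u}" by (auto simp: pvec_def)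
  ultimately show ?thesis by (auto simp: Flin_pvec intro: finite_subset)
qed

lemma Flin_in_ideal:
  "in_ideal n g m X Y (c :: qarrow list \<Rightarrow> 'k::field) \<Longrightarrow> finite {w. c w \<noteq> 0} \<and> Flin n g X c = (\<lambda>_ _. 0)"
proof (induction rule: in_ideal.induct)
  case zero
  then show ?case by (simp add: Flin_zero)
next
  case (gen A B \<rho> v u)
  then show ?case by (rule Flin_sandwich_rel_gen)
next
  case (add c d)
  have "{w. c w + d w \<noteq> 0} \<subseteq> {w. c w \<noteq> 0} \<union> {w. d w \<noteq> 0}" by auto
  with add show ?case by (auto simp: Flin_add intro: finite_subset)
next
  case (smult c a)
  have "{w. a * c w \<noteq> 0} \<subseteq> {w. c w \<noteq> 0}" by auto
  with smult show ?case by (auto simp: Flin_smult intro: finite_subset)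
qed

lemma Fpath_eq_if_ideal_equiv:
  assumes "ideal_equiv n g m X Y (pvec w1 :: qarrow list \<Rightarrow> 'k::field) (pvec w2)"
  shows "(Fpath n g X w1 :: int \<Rightarrow> int \<Rightarrow> 'k) = Fpath n g X w2"
proof -
  have "Flin n g X (\<lambda>x. pvec w1 x - (pvec w2 x :: 'k)) = (\<lambda>_ _. 0)"
    using Flin_in_ideal assms unfolding ideal_equiv_def by blast
  then show ?thesis by (simp add: Flin_pvec_diff fun_eq_iff)
qed

lemma Fpath_eq_0_if_in_ideal:
  "in_ideal n g m X Y (pvec w :: qarrow list \<Rightarrow> 'k::field) \<Longrightarrow> (Fpath n g X w :: int \<Rightarrow> int \<Rightarrow> 'k) = (\<lambda>_ _. 0)"
  using Flin_in_ideal[of X Y "pvec w :: qarrow list \<Rightarrow> 'k"] by (simp add: Flin_pvec)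

section \<open>Normal form of paths modulo the relations\<close>

lemma in_Q_le: "in_Q n g m (r, s) \<Longrightarrow> r' \<le> r \<Longrightarrow> in_Q n g m (r', s)"
  by (simp add: in_Q_def)

lemma valid_arrow_Rho_iff: "valid_arrow n g m (Rho r s) \<longleftrightarrow> in_Q n g m (Suc r, s)"
  by (auto simp: valid_arrow_def in_Q_def)

lemma valid_arrow_Pi_splus_iff:
  "s < h \<Longrightarrow> valid_arrow n g m (Pi r (splus n g s)) \<longleftrightarrow> in_Q n g m (Suc r, s) \<and> in_Q n g m (r, splus n g s)"
  by (simp add: valid_arrow_def qsrc_Pi_splus del: qsrc.simps)

lemma ideal_equiv_commutation:
  assumes "s < h" "in_Q n g m (Suc (Suc r), s)" "in_Q n g m (Suc r, splus n g s)"
  shows "ideal_equiv n g m (Suc r, s) (Suc r, splus n g s)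
    (pvec [Rho (Suc r) s, Pi (Suc r) (splus n g s)] :: qarrow list \<Rightarrow> 'k::field)
    (pvec [Pi r (splus n g s), Rho r (splus n g s)])"
proof -
  have "((r + 1, s), (r + 1, splus n g s), \<lambda>w. pvec [Rho (r + 1) s, Pi (r + 1) (splus n g s)] w
      - (pvec [Pi r (splus n g s), Rho r (splus n g s)] w :: 'k)) \<in> rel_gen n g m"
    unfolding rel_gen_def using assms in_Q_le[OF assms(2), of "Suc r"] in_Q_le[OF assms(3), of r]
    by (auto simp: valid_arrow_Rho_iff valid_arrow_Pi_splus_iff)
  from in_ideal_rel_gen[OF this] show ?thesis
    unfolding ideal_equiv_def using in_Q_le[OF assms(2)] assms(3) by simp
qed

lemma in_ideal_zero_relation:
  assumes "s < h" "in_Q n g m (Suc 0, s)" "in_Q n g m (0, splus n g s)"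
  shows "in_ideal n g m (0, s) (0, splus n g s) (pvec [Rho 0 s, Pi 0 (splus n g s)] :: qarrow list \<Rightarrow> 'k::field)"
proof -
  have "((0, s), (0, splus n g s), pvec [Rho 0 s, Pi 0 (splus n g s)] :: qarrow list \<Rightarrow> 'k) \<in> rel_gen n g m"
    unfolding rel_gen_def using assms by (auto simp: valid_arrow_Rho_iff valid_arrow_Pi_splus_iff)
  from in_ideal_rel_gen[OF this] show ?thesis using in_Q_le[OF assms(2)] assms(3) by simp
qed

lemma rho_run_Pi_equiv:
  assumes "is_path n g m (Suc r, s) Y (rho_run (Suc r) s a @ [Pi (r + a) (splus n g s)])"
  shows "ideal_equiv n g m (Suc r, s) Y
    (pvec (rho_run (Suc r) s a @ [Pi (r + a) (splus n g s)]) :: qarrow list \<Rightarrow> 'k::field)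
    (pvec (Pi r (splus n g s) # rho_run r (splus n g s) a))"
  using assms
proof (induction a arbitrary: r)
  case 0
  then show ?case by (simp add: ideal_equiv_refl)
next
  case (Suc a)
  let ?t = "splus n g s"
  let ?tail = "rho_run (Suc (Suc r)) s a @ [Pi (Suc r + a) ?t]"
  have split: "rho_run (Suc r) s (Suc a) @ [Pi (r + Suc a) ?t] = [Rho (Suc r) s] @ ?tail @ []" by simp
  have s: "s < h" using is_path_src[OF Suc.prems] by (simp add: in_Q_def)
  have tail: "is_path n g m (Suc (Suc r), s) Y ?tail" and Rho: "in_Q n g m (Suc (Suc r), s)"
    using Suc.prems by (auto simp: valid_arrow_Rho_iff)
  then have Y: "Y = (Suc r + a, ?t)" and QY: "in_Q n g m (Suc r + a, ?t)"
    unfolding is_path_append by (auto dest: is_path_tgt)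
  have R: "is_path n g m (Suc r, s) (Suc (Suc r), s) [Rho (Suc r) s]"
    using Rho by (simp add: valid_arrow_Rho_iff)
  have e1: "ideal_equiv n g m (Suc r, s) Y (pvec ([Rho (Suc r) s] @ ?tail @ []) :: qarrow list \<Rightarrow> 'k)
      (pvec ([Rho (Suc r) s] @ (Pi (Suc r) ?t # rho_run (Suc r) ?t a) @ []))"
    by (rule ideal_equiv_pvec_context[OF Suc.IH[OF tail] R]) (use QY Y in simp)
  have e2: "ideal_equiv n g m (Suc r, s) Y
      (pvec ([] @ [Rho (Suc r) s, Pi (Suc r) ?t] @ rho_run (Suc r) ?t a) :: qarrow list \<Rightarrow> 'k)
      (pvec ([] @ [Pi r ?t, Rho r ?t] @ rho_run (Suc r) ?t a))"
    by (rule ideal_equiv_pvec_context[OF ideal_equiv_commutation[OF s Rho]])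
       (use QY Y is_path_src[OF Suc.prems] is_path_rho_run[of "Suc r" a ?t] in_Q_le[OF QY, of "Suc r"] in auto)
  show ?case using ideal_equiv_trans[OF e1] e2 unfolding split by simp
qed

lemma canon_path_snoc_Rho:
  assumes "b \<in> canon_exps r s r' s'"
  shows "canon_path r s r' b @ [Rho r' s'] = canon_path r s (Suc r') b \<and> b \<in> canon_exps r s (Suc r') s'"
proof -
  have "r - b + (r' + b - r) = r'" "Suc r' + b - r = Suc (r' + b - r)" "(s + b) mod h = s'"
    using assms by (auto simp: canon_exps_def)
  then show ?thesis using assms rho_run_snoc[of "r - b" "(s + b) mod h" "r' + b - r"]
    by (auto simp: canon_path_def canon_exps_def)
qed

lemma canon_path_snoc_Pi_equiv:
  assumes b: "b \<in> canon_exps r s (Suc r') s'" "b < r"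
    and path: "is_path n g m (r, s) Y (canon_path r s (Suc r') b @ [Pi r' (splus n g s')])"
  shows "Suc b \<in> canon_exps r s r' (splus n g s')
    \<and> ideal_equiv n g m (r, s) Y (pvec (canon_path r s (Suc r') b @ [Pi r' (splus n g s')]) :: qarrow list \<Rightarrow> 'k::field)
        (pvec (canon_path r s r' (Suc b)))"
proof -
  obtain r0 where r0: "r - b = Suc r0" using b(2) by (cases "r - b") auto
  define a where "a = Suc r' + b - r"
  have s': "(s + b) mod h = s'" "s' < h" using b h_pos by (auto simp: canon_exps_def)
  have "r = Suc r0 + b" using r0 b(2) by arith
  then have a: "r0 + a = r'" using b(1) by (simp add: a_def canon_exps_def)
  have split: "canon_path r s (Suc r') b @ [Pi r' (splus n g s')] =
      pi_run r s b @ (rho_run (Suc r0) s' a @ [Pi (r0 + a) (splus n g s')]) @ []"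
    using a unfolding a_def by (simp add: canon_path_def r0 s')
  have p: "is_path n g m (r, s) (Suc r0, s') (pi_run r s b)"
    using is_path_pi_run[OF is_path_src[OF path], of b] b(2) r0 s' by simp
  then have "is_path n g m (Suc r0, s') Y (rho_run (Suc r0) s' a @ [Pi (r0 + a) (splus n g s')])"
    using path unfolding split is_path_append by (auto dest: is_path_target_unique)
  from ideal_equiv_pvec_context[OF rho_run_Pi_equiv[OF this] p, of Y "[]"]
  have "ideal_equiv n g m (r, s) Y (pvec (canon_path r s (Suc r') b @ [Pi r' (splus n g s')]) :: qarrow list \<Rightarrow> 'k)
      (pvec (pi_run r s b @ Pi r0 (splus n g s') # rho_run r0 (splus n g s') a))"
    using is_path_tgt[OF path] unfolding split by simp
  moreover have "pi_run r s b @ [Pi r0 (splus n g s')] = pi_run r s (Suc b)"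
    using pi_run_snoc[of s r b] is_path_src[OF path] r0 s' by (simp add: in_Q_def del: pi_run.simps(2))
  moreover have "canon_path r s r' (Suc b) = pi_run r s (Suc b) @ rho_run r0 (splus n g s') a"
    using splus_eq_Suc_mod[OF s'(2)] mod_Suc_eq[of "s + b" h] r0 s' \<open>r = Suc r0 + b\<close>
    by (simp add: canon_path_def a_def del: pi_run.simps(2))
  ultimately have "ideal_equiv n g m (r, s) Y (pvec (canon_path r s (Suc r') b @ [Pi r' (splus n g s')]) :: qarrow list \<Rightarrow> 'k)
      (pvec (canon_path r s r' (Suc b)))"
    by (metis append.assoc append_Cons append_Nil)
  moreover have "Suc b \<in> canon_exps r s r' (splus n g s')"
    using b splus_eq_Suc_mod[OF s'(2)] s' by (auto simp: canon_exps_def mod_Suc_eq)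
  ultimately show ?thesis by simp
qed

lemma canon_path_snoc_Pi_in_ideal:
  assumes b: "r \<in> canon_exps r s (Suc r') s'"
    and path: "is_path n g m (r, s) Y (canon_path r s (Suc r') r @ [Pi r' (splus n g s')])"
  shows "in_ideal n g m (r, s) Y (pvec (canon_path r s (Suc r') r @ [Pi r' (splus n g s')]) :: qarrow list \<Rightarrow> 'k::field)"
proof -
  let ?t = "splus n g s'"
  have s': "(s + r) mod h = s'" "s' < h" using b h_pos by (auto simp: canon_exps_def)
  have split: "canon_path r s (Suc r') r @ [Pi r' ?t] =
      (pi_run r s r @ [Rho 0 s']) @ (rho_run (Suc 0) s' r' @ [Pi (0 + r') ?t]) @ []"
    by (simp add: canon_path_def s')
  have p: "is_path n g m (r, s) (0, s') (pi_run r s r)"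
    using is_path_pi_run[OF is_path_src[OF path], of r] s' by simp
  obtain Z where "is_path n g m (0, s') Z [Rho 0 s']"
    and tail: "is_path n g m Z Y (rho_run (Suc 0) s' r' @ [Pi (0 + r') ?t])"
    using path unfolding split is_path_append by (auto dest: is_path_target_unique[OF p])
  then have Z: "Z = (Suc 0, s')" and Q1: "in_Q n g m (Suc 0, s')" by (auto simp: valid_arrow_Rho_iff)
  have pR: "is_path n g m (r, s) (Suc 0, s') (pi_run r s r @ [Rho 0 s'])"
    using p Q1 is_path_append by (fastforce simp: valid_arrow_Rho_iff)
  have Y: "in_Q n g m Y" "Y = (r', ?t)" using tail Z unfolding is_path_append by (auto dest: is_path_tgt)
  have "ideal_equiv n g m (r, s) Y (pvec (canon_path r s (Suc r') r @ [Pi r' ?t]) :: qarrow list \<Rightarrow> 'k)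
      (pvec (pi_run r s r @ [Rho 0 s', Pi 0 ?t] @ rho_run 0 ?t r'))"
    using ideal_equiv_pvec_context[OF rho_run_Pi_equiv[OF tail[unfolded Z]] pR, of Y "[]"] Y
    unfolding split by simp
  moreover have "in_ideal n g m (r, s) Y (pvec (pi_run r s r @ [Rho 0 s', Pi 0 ?t] @ rho_run 0 ?t r') :: qarrow list \<Rightarrow> 'k)"
    by (rule in_ideal_pvec_context[OF in_ideal_zero_relation[OF s'(2) Q1] p])
       (use Y in_Q_le[of r' ?t 0] is_path_rho_run[of 0 r' ?t] in auto)
  ultimately show ?thesis by (rule in_ideal_equiv)
qed

lemma canon_path_snoc_normal_form:
  assumes b: "b \<in> canon_exps r s r'' s''" and Q: "in_Q n g m (r'', s'')"
    and path: "is_path n g m (r, s) (r', s') (canon_path r s r'' b @ [x])"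
  shows "in_ideal n g m (r, s) (r', s') (pvec (canon_path r s r'' b @ [x]) :: qarrow list \<Rightarrow> 'k::field)
    \<or> (\<exists>b'\<in>canon_exps r s r' s'. ideal_equiv n g m (r, s) (r', s')
          (pvec (canon_path r s r'' b @ [x]) :: qarrow list \<Rightarrow> 'k) (pvec (canon_path r s r' b')))"
proof -
  have "is_path n g m (r, s) (r'', s'') (canon_path r s r'' b)"
    using is_path_canon_path[OF is_path_src[OF path] Q b] .
  then have x: "is_path n g m (r'', s'') (r', s') [x]" and s'': "s'' < h"
    using path Q unfolding is_path_append by (auto dest: is_path_target_unique simp: in_Q_def)
  show ?thesis
  proof (cases x)
    case (Rho r1 s1)
    then have "x = Rho r'' s''" "r' = Suc r''" "s' = s''" using x by auto
    then show ?thesis using canon_path_snoc_Rho[OF b] by (auto intro: ideal_equiv_refl)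
  next
    case (Pi r1 t)
    have "t < h" using x Pi by (auto simp: valid_arrow_def in_Q_def)
    then have x: "x = Pi r' (splus n g s'')" and r'': "r'' = Suc r'" and s': "s' = splus n g s''"
      using x Pi h_pos by (auto simp: splus_def split: if_splits)
    note b = b[unfolded r''] and path = path[unfolded x r'' s']
    show ?thesis
    proof (cases "b < r")
      case True
      from canon_path_snoc_Pi_equiv[OF b True path] show ?thesis unfolding x r'' s' by blast
    next
      case False
      then have "b = r" using b by (simp add: canon_exps_def)
      from canon_path_snoc_Pi_in_ideal[OF b[unfolded this] path[unfolded this]] show ?thesis
        unfolding x r'' s' \<open>b = r\<close> by blast
    qed
  qed
qed

lemma path_normal_form:
  assumes "is_path n g m (r, s) (r', s') w"
  shows "in_ideal n g m (r, s) (r', s') (pvec w :: qarrow list \<Rightarrow> 'k::field)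
    \<or> (\<exists>b\<in>canon_exps r s r' s'. ideal_equiv n g m (r, s) (r', s') (pvec w :: qarrow list \<Rightarrow> 'k)
          (pvec (canon_path r s r' b)))"
  using assms
proof (induction w arbitrary: r' s' rule: rev_induct)
  case Nil
  then have "r' = r" "s' = s" "s < h" by (auto simp: in_Q_def)
  then have "0 \<in> canon_exps r s r' s'" "canon_path r s r' 0 = []"
    by (simp_all add: canon_exps_def canon_path_def)
  then show ?case using ideal_equiv_refl by fastforce
next
  case (snoc x w)
  then obtain r'' s'' where w: "is_path n g m (r, s) (r'', s'') w" and x: "is_path n g m (r'', s'') (r', s') [x]"
    unfolding is_path_append by auto
  have start: "is_path n g m (r, s) (r, s) []" using is_path_src[OF w] by simp
  from snoc.IH[OF w] show ?case
  proof (elim disjE bexE)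
    assume "in_ideal n g m (r, s) (r'', s'') (pvec w :: qarrow list \<Rightarrow> 'k)"
    from in_ideal_pvec_context[OF this start x] show ?thesis by simp
  next
    fix b assume b: "b \<in> canon_exps r s r'' s''"
      and e: "ideal_equiv n g m (r, s) (r'', s'') (pvec w :: qarrow list \<Rightarrow> 'k) (pvec (canon_path r s r'' b))"
    have e': "ideal_equiv n g m (r, s) (r', s') (pvec (w @ [x]) :: qarrow list \<Rightarrow> 'k)
        (pvec (canon_path r s r'' b @ [x]))"
      using ideal_equiv_pvec_context[OF e start x] by simp
    have "is_path n g m (r, s) (r', s') (canon_path r s r'' b @ [x])"
      using is_path_canon_path[OF is_path_src[OF w] is_path_tgt[OF w] b] x is_path_append by blast
    from canon_path_snoc_normal_form[OF b is_path_tgt[OF w] this] show ?thesis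
    proof (elim disjE bexE)
      assume "in_ideal n g m (r, s) (r', s') (pvec (canon_path r s r'' b @ [x]) :: qarrow list \<Rightarrow> 'k)"
      then show ?thesis using in_ideal_equiv[OF e'] by blast
    next
      fix b' assume b': "b' \<in> canon_exps r s r' s'" and eb: "ideal_equiv n g m (r, s) (r', s')
        (pvec (canon_path r s r'' b @ [x]) :: qarrow list \<Rightarrow> 'k) (pvec (canon_path r s r' b'))"
      have "ideal_equiv n g m (r, s) (r', s') (pvec (w @ [x]) :: qarrow list \<Rightarrow> 'k) (pvec (canon_path r s r' b'))"
        by (rule ideal_equiv_trans[OF e' eb])
      with b' show ?thesis by blast
    qed
  qed
qed

lemma pp_minus_1_mod_ge: "s < h \<Longrightarrow> int g \<le> (pp g s - 1) mod N"
proof (cases "s = 0")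
  case True
  have "(-1 :: int) mod N = N - 1" by (rule zmod_minus1) simp
  then show ?thesis using True g_le_n by (simp add: pp_def)
next
  case False
  assume "s < h"
  then have "int g + int s - 1 < N" using g_plus_h by linarith
  moreover have "0 \<le> int g + int s - 1" using g_pos by simp
  ultimately show ?thesis using False by (simp add: pp_def)
qed

lemma pp_mod_alpha_target: "s < h \<Longrightarrow> \<exists>x\<in>{g..n}. pp g s mod N = int ((x + 1) mod (n + 1))"
proof (cases "s = 0")
  case True
  then show ?thesis using g_le_n by (intro bexI[of _ n]) (auto simp: pp_def)
next
  case False
  assume "s < h"
  then have le: "g + s \<le> n" using g_plus_h by simp
  then have "pp g s mod N = int (g + s)" using False by (simp add: pp_def)
  moreover have "(g + s - 1 + 1) mod (n + 1) = g + s" using le False by simp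
  ultimately show ?thesis using le False g_pos by (intro bexI[of _ "g + s - 1"]) auto
qed

lemma canon_shift_is_rep_hom:
  assumes Q: "in_Q n g m (r, s)" "in_Q n g m (r', s')" and b: "b \<in> canon_exps r s r' s'"
  shows "is_rep_hom n g (Fobj n g (r, s)) (Fobj n g (r', s'))
    (shift_mat (N * int ((s + b) div h)) (pp_periodic n g (s + b)) (qq_sum n g (r + s)) :: int \<Rightarrow> int \<Rightarrow> 'k::field)"
proof -
  let ?k = "(s + b) div h"
  have s: "s < h" and s': "s' < h" and b': "b \<le> r" "(s + b) mod h = s'" "r \<le> r' + b"
    using Q b by (auto simp: in_Q_def canon_exps_def)
  have pp: "pp_periodic n g (s + b) = pp g s' + N * int ?k" using b' by (simp add: pp_periodic_def)
  have "r' + s' + h * ?k = r' + (s + b)" using b' by (metis add.assoc mod_div_mult_eq mult.commute)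
  then have "qq_sum n g (r' + s') + N * int ?k = qq_sum n g (r' + (s + b))" by (metis qq_sum_add_mult)
  moreover have "qq_sum n g (r + s) \<le> qq_sum n g (r' + (s + b))"
    using strict_mono_less_eq[OF strict_mono_qq_sum] b' by simp
  ultimately have "qq_sum n g (r + s) \<le> qq_sum n g (r' + s') + N * int ?k" by simp
  moreover have "pp g s \<le> pp g s' + N * int ?k"
    using strict_mono_less_eq[OF strict_mono_pp_periodic, of s "s + b"] pp_periodic_small[OF s] pp by simp
  moreover have "pp g s' + N * int ?k \<le> qq_sum n g (r + s)"
    using pp_periodic_le_qq_sum_iff[of "s + b" "r + s"] pp b' by simp
  ultimately show ?thesis
    using shift_mat_is_rep_hom[of "pp g s" "pp g s'" "N * int ?k" "qq_sum n g (r + s)" "qq_sum n g (r' + s')"]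
      qq_sum_mod_ge pp_minus_1_mod_ge[OF s'] pp by (simp add: Fobj_eq)
qed

lemma Fpath_is_rep_hom:
  assumes "is_path n g m (r, s) (r', s') w"
  shows "is_rep_hom n g (Fobj n g (r, s)) (Fobj n g (r', s')) (Fpath n g (r, s) w :: int \<Rightarrow> int \<Rightarrow> 'k::field)"
  using path_normal_form[where 'k='k, OF assms]
proof (elim disjE bexE)
  assume "in_ideal n g m (r, s) (r', s') (pvec w :: qarrow list \<Rightarrow> 'k)"
  then show ?thesis by (simp add: Fpath_eq_0_if_in_ideal is_rep_hom_zero)
next
  fix b assume b: "b \<in> canon_exps r s r' s'"
    and e: "ideal_equiv n g m (r, s) (r', s') (pvec w :: qarrow list \<Rightarrow> 'k) (pvec (canon_path r s r' b))"
  have "(Fpath n g (r, s) w :: int \<Rightarrow> int \<Rightarrow> 'k) = Fpath n g (r, s) (canon_path r s r' b)"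
    by (rule Fpath_eq_if_ideal_equiv[OF e])
  also have "\<dots> = shift_mat (N * int ((s + b) div h)) (pp_periodic n g (s + b)) (qq_sum n g (r + s))"
    using Fpath_canon_path[OF is_path_src[OF assms] is_path_tgt[OF assms] b] .
  finally show ?thesis
    using canon_shift_is_rep_hom[OF is_path_src[OF assms] is_path_tgt[OF assms] b] by simp
qed

lemma Flin_in_HomK:
  assumes "c \<in> (kQ n g m (r, s) (r', s') :: (qarrow list \<Rightarrow> 'k::field) set)"
  shows "Flin n g (r, s) c \<in> HomK n g (Fobj n g (r, s)) (Fobj n g (r', s'))"
proof -
  have "finite {w. c w \<noteq> 0}" "\<And>w. c w \<noteq> 0 \<Longrightarrow> is_path n g m (r, s) (r', s') w"
    using assms by (auto simp: kQ_def)
  then have "is_rep_hom n g (Fobj n g (r, s)) (Fobj n g (r', s'))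
      (\<lambda>i j. \<Sum>w\<in>{w. c w \<noteq> 0}. c w * Fpath n g (r, s) w i j)"
    by (intro is_rep_hom_sum) (auto intro: Fpath_is_rep_hom)
  then show ?thesis by (simp add: HomK_def Flin_def)
qed

section \<open>Fullness\<close>

lemma canon_exp_of_shift:
  assumes s: "s < h" and s': "s' < h" and lo: "pp g s \<le> pp g s' + N * k"
    and mid: "pp g s' + N * k \<le> qq_sum n g (r + s)" and hi: "qq_sum n g (r + s) \<le> qq_sum n g (r' + s') + N * k"
  obtains b where "b \<in> canon_exps r s r' s'" "int ((s + b) div h) = k" "pp_periodic n g (s + b) = pp g s' + N * k"
proof -
  have "- N < N * k" using lo pp_nonneg[of g s] pp_less_N[OF s'] by linarith
  then have "- 1 < k" using mult_less_cancel_left_pos[of N "- 1" k] by simp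
  then obtain kn where kn: "k = int kn" using nonneg_eq_int[of k] by fastforce
  define t where "t = h * kn + s'"
  have pt: "pp_periodic n g t = pp g s' + N * k" unfolding t_def using pp_periodic_decomp[OF s'] kn by simp
  then have "s \<le> t"
    using lo pp_periodic_small[OF s] strict_mono_less_eq[OF strict_mono_pp_periodic, of s t] by simp
  define b where "b = t - s"
  have sb: "s + b = t" using \<open>s \<le> t\<close> by (simp add: b_def)
  have "t \<le> r + s" using mid pt pp_periodic_le_qq_sum_iff[of t "r + s"] by simp
  moreover have "qq_sum n g (r' + s') + N * k = qq_sum n g (r' + s' + h * kn)" using qq_sum_add_mult kn by simp
  then have "r + s \<le> r' + s' + h * kn" using hi strict_mono_less_eq[OF strict_mono_qq_sum] by simp
  moreover have "t mod h = s'" "t div h = kn" using s' h_pos by (auto simp: t_def)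
  ultimately show ?thesis using that[of b] sb kn pt by (auto simp: canon_exps_def t_def)
qed

lemma diag_part_in_image:
  assumes Q: "in_Q n g m (r, s)" "in_Q n g m (r', s')"
    and M: "M \<in> HomK n g (Fobj n g (r, s)) (Fobj n g (r', s'))"
  shows "diag_part M (N * k) \<in> Flin n g (r, s) ` (kQ n g m (r, s) (r', s') :: (qarrow list \<Rightarrow> 'k::field) set)"
proof (cases "\<exists>i. M i (i - N * k) \<noteq> 0")
  case True
  then obtain i0 where nz: "M i0 (i0 - N * k) \<noteq> 0" by blast
  have s: "s < h" and s': "s' < h" using Q by (auto simp: in_Q_def)
  have hom: "is_rep_hom n g (pp g s, qq_sum n g (r + s)) (pp g s', qq_sum n g (r' + s')) (M :: int \<Rightarrow> int \<Rightarrow> 'k)"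
    using M by (simp add: HomK_def Fobj_eq)
  note shape = diag_part_eq_shift_mat[OF hom pp_mod_alpha_target[OF s] qq_sum_mod_ge nz]
  then obtain b where b: "b \<in> canon_exps r s r' s'" "int ((s + b) div h) = k"
    "pp_periodic n g (s + b) = pp g s' + N * k"
    using canon_exp_of_shift[OF s s'] by blast
  define c where "c = (\<lambda>w. M i0 (i0 - N * k) * pvec (canon_path r s r' b) w)"
  have c_in: "c \<in> kQ n g m (r, s) (r', s')"
    using is_path_canon_path[OF Q b(1)] by (auto simp: kQ_def c_def pvec_def)
  have c_eq: "Flin n g (r, s) c = diag_part M (N * k)"
    using shape b Fpath_canon_path[where 'k='k, OF Q b(1)] unfolding c_def Flin_smult[OF finite_support_pvec] Flin_pvec
    by simp
  show ?thesis unfolding c_eq[symmetric] using c_in by (rule imageI)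
next
  case False
  then have "diag_part M (N * k) = Flin n g (r, s) (\<lambda>_. 0)" by (auto simp: diag_part_def Flin_zero fun_eq_iff)
  moreover have "(\<lambda>_. 0) \<in> kQ n g m (r, s) (r', s')" by (simp add: kQ_def)
  ultimately show ?thesis by (rule image_eqI)
qed

lemma HomK_subset_image:
  assumes "in_Q n g m (r, s)" "in_Q n g m (r', s')"
  shows "HomK n g (Fobj n g (r, s)) (Fobj n g (r', s'))
    \<subseteq> Flin n g (r, s) ` (kQ n g m (r, s) (r', s') :: (qarrow list \<Rightarrow> 'k::field) set)"
proof
  fix M :: "int \<Rightarrow> int \<Rightarrow> 'k" assume M: "M \<in> HomK n g (Fobj n g (r, s)) (Fobj n g (r', s'))"
  then have "is_rep_hom n g (pp g s, qq_sum n g (r + s)) (pp g s', qq_sum n g (r' + s')) M"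
    by (simp add: HomK_def Fobj_eq)
  then obtain K where "finite K" and M_eq: "M = (\<lambda>i j. \<Sum>k\<in>K. diag_part M (N * k) i j)"
    by (rule is_rep_hom_sum_diag_part)
  show "M \<in> Flin n g (r, s) ` kQ n g m (r, s) (r', s')"
    by (subst M_eq) (rule Flin_image_sum[OF \<open>finite K\<close> diag_part_in_image[OF assms M]])
qed

section \<open>Faithfulness\<close>

text \<open>Evaluating at this entry reads off the coefficient of \<open>canon_path r s r' b0\<close> in a linear
  combination of canonical paths.\<close>
lemma Fpath_canon_path_entry:
  assumes Q: "in_Q n g m (r, s)" "in_Q n g m (r', s')"
    and b: "b \<in> canon_exps r s r' s'" "b0 \<in> canon_exps r s r' s'"
  shows "(Fpath n g (r, s) (canon_path r s r' b) :: int \<Rightarrow> int \<Rightarrow> 'k::field)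
      (pp_periodic n g (s + b0)) (pp_periodic n g (s + b0) - N * int ((s + b0) div h)) = (if b = b0 then 1 else 0)"
proof -
  have "pp_periodic n g (s + b0) \<le> qq_sum n g (r + s)"
    using b(2) pp_periodic_le_qq_sum_iff by (simp add: canon_exps_def)
  moreover have "b = b0" if "(s + b) div h = (s + b0) div h"
  proof -
    have "(s + b) mod h = (s + b0) mod h" using b by (simp add: canon_exps_def)
    with that have "s + b = s + b0" by (metis div_mult_mod_eq)
    then show ?thesis by simp
  qed
  ultimately show ?thesis unfolding Fpath_canon_path[OF Q b(1)] by (auto simp: shift_mat_def)
qed

lemma canon_coeff_eq_entry:
  assumes Q: "in_Q n g m (r, s)" "in_Q n g m (r', s')" and b0: "b0 \<in> canon_exps r s r' s'"
    and d: "d = (\<lambda>_. 0) \<or> (\<exists>b\<in>canon_exps r s r' s'. d = pvec (canon_path r s r' b))"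
  shows "(d (canon_path r s r' b0) :: 'k::field) =
    Flin n g (r, s) d (pp_periodic n g (s + b0)) (pp_periodic n g (s + b0) - N * int ((s + b0) div h))"
  using d
proof (elim disjE bexE)
  assume "d = (\<lambda>_. 0)"
  then show ?thesis by (simp add: Flin_zero)
next
  fix b assume b: "b \<in> canon_exps r s r' s'" and d: "d = pvec (canon_path r s r' b)"
  then have "Flin n g (r, s) d = Fpath n g (r, s) (canon_path r s r' b)" by (simp add: Flin_pvec)
  then show ?thesis
    using Fpath_canon_path_entry[where 'k='k, OF Q b b0] canon_path_inj[OF b b0] d
    by (auto simp: pvec_def)
qed

lemma path_reduct:
  assumes "is_path n g m (r, s) (r', s') w"
  obtains d :: "qarrow list \<Rightarrow> 'k::field"
  where "ideal_equiv n g m (r, s) (r', s') (pvec w) d" "Flin n g (r, s) d = Fpath n g (r, s) w"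
    and "d = (\<lambda>_. 0) \<or> (\<exists>b\<in>canon_exps r s r' s'. d = pvec (canon_path r s r' b))"
  using path_normal_form[where 'k='k, OF assms]
proof (elim disjE bexE)
  assume i: "in_ideal n g m (r, s) (r', s') (pvec w :: qarrow list \<Rightarrow> 'k)"
  then show thesis using Fpath_eq_0_if_in_ideal[OF i] that[of "\<lambda>_. 0"]
    by (simp add: ideal_equiv_def Flin_zero)
next
  fix b assume "b \<in> canon_exps r s r' s'"
    and e: "ideal_equiv n g m (r, s) (r', s') (pvec w :: qarrow list \<Rightarrow> 'k) (pvec (canon_path r s r' b))"
  then show thesis using Fpath_eq_if_ideal_equiv[OF e] that[of "pvec (canon_path r s r' b)"]
    by (auto simp: Flin_pvec)
qed

lemma canon_reduction:
  assumes Q: "in_Q n g m (r, s)" "in_Q n g m (r', s')"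
    and c: "c \<in> (kQ n g m (r, s) (r', s') :: (qarrow list \<Rightarrow> 'k::field) set)"
  obtains D where "in_ideal n g m (r, s) (r', s') (\<lambda>x. c x - (\<Sum>w\<in>{w. c w \<noteq> 0}. c w * D w x))"
    and "\<And>w. c w \<noteq> 0 \<Longrightarrow> Flin n g (r, s) (D w) = Fpath n g (r, s) w"
    and "\<And>w. c w \<noteq> 0 \<Longrightarrow> D w = (\<lambda>_. 0) \<or> (\<exists>b\<in>canon_exps r s r' s'. D w = pvec (canon_path r s r' b))"
proof -
  let ?S = "{w. c w \<noteq> 0}"
  have fin: "finite ?S" and path: "\<And>w. w \<in> ?S \<Longrightarrow> is_path n g m (r, s) (r', s') w"
    using c by (auto simp: kQ_def)
  have "\<forall>w\<in>?S. \<exists>d :: qarrow list \<Rightarrow> 'k. ideal_equiv n g m (r, s) (r', s') (pvec w) d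
      \<and> Flin n g (r, s) d = Fpath n g (r, s) w
      \<and> (d = (\<lambda>_. 0) \<or> (\<exists>b\<in>canon_exps r s r' s'. d = pvec (canon_path r s r' b)))"
    using path_reduct[where 'k='k, OF path] by blast
  from bchoice[OF this] obtain D :: "qarrow list \<Rightarrow> qarrow list \<Rightarrow> 'k"
    where D: "\<And>w. w \<in> ?S \<Longrightarrow> ideal_equiv n g m (r, s) (r', s') (pvec w) (D w)
      \<and> Flin n g (r, s) (D w) = Fpath n g (r, s) w
      \<and> (D w = (\<lambda>_. 0) \<or> (\<exists>b\<in>canon_exps r s r' s'. D w = pvec (canon_path r s r' b)))"
    by blast
  have "in_ideal n g m (r, s) (r', s') (\<lambda>x. \<Sum>w\<in>?S. c w * (pvec w x - D w x))"
  proof (rule in_ideal_sum[OF fin])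
    fix w assume "w \<in> ?S"
    then have "in_ideal n g m (r, s) (r', s') (\<lambda>x. pvec w x - D w x)"
      using D unfolding ideal_equiv_def by blast
    then show "in_ideal n g m (r, s) (r', s') (\<lambda>x. c w * (pvec w x - D w x))" by (rule in_ideal.smult)
  qed
  moreover have "(\<lambda>x. c x - (\<Sum>w\<in>?S. c w * D w x)) = (\<lambda>x. \<Sum>w\<in>?S. c w * (pvec w x - D w x))"
  proof
    fix x
    have "(\<Sum>w\<in>?S. c w * pvec w x) = (\<Sum>w\<in>?S. if w = x then c w else 0)"
      by (intro sum.cong) (auto simp: pvec_def)
    also have "\<dots> = c x" using fin by (simp add: sum.delta)
    finally show "c x - (\<Sum>w\<in>?S. c w * D w x) = (\<Sum>w\<in>?S. c w * (pvec w x - D w x))"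
      by (simp add: right_diff_distrib sum_subtractf)
  qed
  ultimately have "in_ideal n g m (r, s) (r', s') (\<lambda>x. c x - (\<Sum>w\<in>?S. c w * D w x))" by simp
  then show ?thesis by (rule that) (use D in blast)+
qed

lemma Flin_eq_0_imp_in_ideal:
  assumes Q: "in_Q n g m (r, s)" "in_Q n g m (r', s')"
    and c: "c \<in> (kQ n g m (r, s) (r', s') :: (qarrow list \<Rightarrow> 'k::field) set)"
    and zero: "Flin n g (r, s) c = (\<lambda>_ _. 0)"
  shows "in_ideal n g m (r, s) (r', s') c"
proof -
  let ?S = "{w. c w \<noteq> 0}"
  obtain D :: "qarrow list \<Rightarrow> qarrow list \<Rightarrow> 'k"
    where ideal: "in_ideal n g m (r, s) (r', s') (\<lambda>x. c x - (\<Sum>w\<in>?S. c w * D w x))"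
    and FD: "\<And>w. c w \<noteq> 0 \<Longrightarrow> Flin n g (r, s) (D w) = Fpath n g (r, s) w"
    and shape: "\<And>w. c w \<noteq> 0 \<Longrightarrow> D w = (\<lambda>_. 0) \<or> (\<exists>b\<in>canon_exps r s r' s'. D w = pvec (canon_path r s r' b))"
    using canon_reduction[OF Q c] by blast
  have "(\<Sum>w\<in>?S. c w * D w x) = 0" for x
  proof (cases "\<exists>b0\<in>canon_exps r s r' s'. x = canon_path r s r' b0")
    case True
    then obtain b0 where b0: "b0 \<in> canon_exps r s r' s'" and x: "x = canon_path r s r' b0" by blast
    let ?i = "pp_periodic n g (s + b0)"
    let ?j = "pp_periodic n g (s + b0) - N * int ((s + b0) div h)"
    have "(\<Sum>w\<in>?S. c w * D w x) = (\<Sum>w\<in>?S. c w * Fpath n g (r, s) w ?i ?j)"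
      using canon_coeff_eq_entry[OF Q b0 shape] FD unfolding x by (intro sum.cong) auto
    also have "\<dots> = Flin n g (r, s) c ?i ?j" by (simp add: Flin_def)
    finally show ?thesis using zero by simp
  next
    case False
    then have "D w x = 0" if "w \<in> ?S" for w using shape[of w] that by (auto simp: pvec_def)
    then show ?thesis by simp
  qed
  with ideal show ?thesis by simp
qed

lemma inj_on_Fobj: "inj_on (Fobj n g) {X. in_Q n g m X}"
proof (rule inj_onI, clarify)
  fix r s r' s' assume "Fobj n g (r, s) = Fobj n g (r', s')"
  then have "pp g s = pp g s'" "qq_sum n g (r + s) = qq_sum n g (r' + s')" by (simp_all add: Fobj_eq)
  then have "s = s'" "r + s = r' + s'"
    using strict_mono_eq[OF pp_strict_mono] strict_mono_eq[OF strict_mono_qq_sum] by simp_all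
  then show "r = r' \<and> s = s'" by simp
qed

lemma full_and_faithful:
  assumes "in_Q n g m X" "in_Q n g m Y"
  shows "Flin n g X ` (kQ n g m X Y :: (qarrow list \<Rightarrow> 'k::field) set) = HomK n g (Fobj n g X) (Fobj n g Y)
    \<and> (\<forall>c \<in> (kQ n g m X Y :: (qarrow list \<Rightarrow> 'k) set). Flin n g X c = (\<lambda>_ _. 0) \<longleftrightarrow> in_ideal n g m X Y c)"
proof -
  obtain r s r' s' where XY: "X = (r, s)" "Y = (r', s')" by (cases X, cases Y)
  show ?thesis unfolding XY
  proof (intro conjI ballI)
    show "Flin n g (r, s) ` (kQ n g m (r, s) (r', s') :: (qarrow list \<Rightarrow> 'k) set)
      = HomK n g (Fobj n g (r, s)) (Fobj n g (r', s'))"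
      using assms unfolding XY by (intro equalityI HomK_subset_image) (auto intro: Flin_in_HomK)
  next
    fix c assume "c \<in> (kQ n g m (r, s) (r', s') :: (qarrow list \<Rightarrow> 'k) set)"
    then show "Flin n g (r, s) c = (\<lambda>_ _. 0) \<longleftrightarrow> in_ideal n g m (r, s) (r', s') c"
      using Flin_eq_0_imp_in_ideal Flin_in_ideal assms unfolding XY by blast
  qed
qed

end

theorem mainTheorem3:
  fixes n g m :: nat
  assumes alg_closed: "\<forall>p :: 'k::field poly. degree p > 0 \<longrightarrow> (\<exists>x. poly p x = 0)"
    and "1 \<le> n" and "1 \<le> g" and "g \<le> n"
  shows "inj_on (Fobj n g) {X. in_Q n g m X}
    \<and> (\<forall>X Y. in_Q n g m X \<longrightarrow> in_Q n g m Y \<longrightarrow>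
          Flin n g X ` (kQ n g m X Y :: (qarrow list \<Rightarrow> 'k) set) = HomK n g (Fobj n g X) (Fobj n g Y)
        \<and> (\<forall>c \<in> (kQ n g m X Y :: (qarrow list \<Rightarrow> 'k) set).
              Flin n g X c = (\<lambda>_ _. 0) \<longleftrightarrow> in_ideal n g m X Y c))"
proof -
  interpret tube n g m using assms by unfold_locales
  show ?thesis
    by (rule conjI[OF inj_on_Fobj], intro allI impI) (rule full_and_faithful)
qed

end
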